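(* Consider the DSA algorithm described in the context, under conditions (a)–(c) on the weights and assuming every $f_{n,i}$ is differentiable and $\mu$-strongly convex with $L$-Lipschitz gradient. Let $\eta$ be any constant with $$\eta\in\left(\frac{L^2q_{\max}}{\mu q_{\min}}+\frac{L^2}{\mu}-L,\ \infty\right),$$ let the stepsize satisfy $\alpha\in(0,\gamma/(2\eta))$, and let $c$ be any constant with $$c\in\left(\frac{4\alpha Lq_{\max}}{\eta},\ \frac{4\alpha\mu q_{\min}}{L}-\frac{2\alpha q_{\min}(2L-\mu)}{\eta}\right).$$ Then there exists a constant $0<\delta<1$ such that for all $t$, $$\mathbb{E}\left[\|\mathbf{u}^{t+1}-\mathbf{u}^*\|_{\mathbf{G}}^2+c\,p^{t+1}\mid\mathcal{F}^t\right]\le(1-\delta)\left(\|\mathbf{u}^t-\mathbf{u}^*\|_{\mathbf{G}}^2+c\,p^t\right).$$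
   Context: Problem: a connected network of $N$ nodes; node $n$ holds $q_n$ functions $f_{n,i}:\mathbb{R}^p\to\mathbb{R}$, each differentiable, $\mu$-strongly convex, with $L$-Lipschitz gradient; $f_n:=\frac1{q_n}\sum_i f_{n,i}$, $\tilde{\mathbf{x}}^*:=\arg\min_{\mathbf{x}}\sum_n f_n(\mathbf{x})$; $q_{\min}:=\min_n q_n$, $q_{\max}:=\max_n q_n$. For $\mathbf{x}=[\mathbf{x}_1;\dots;\mathbf{x}_N]\in\mathbb{R}^{Np}$, $f(\mathbf{x}):=\sum_n f_n(\mathbf{x}_n)$, $\mathbf{x}^*:=[\tilde{\mathbf{x}}^*;\dots;\tilde{\mathbf{x}}^*]$. Weights: $\mathbf{W},\tilde{\mathbf{W}}\in\mathbb{R}^{N\times N}$ with entries nonzero only for $m=n$ or $m$ a neighbor of $n$, satisfying (a) symmetry; (b) $\mathrm{null}(\mathbf{I}-\tilde{\mathbf{W}})\supseteq\mathrm{span}(\mathbf{1})$, $\mathrm{null}(\mathbf{I}-\mathbf{W})=\mathrm{span}(\mathbf{1})$, $\mathrm{null}(\tilde{\mathbf{W}}-\mathbf{W})=\mathrm{span}(\mathbf{1})$; (c) $\mathbf{W}\preceq\tilde{\mathbf{W}}\preceq(\mathbf{I}+\mathbf{W})/2$, $\tilde{\mathbf{W}}\succ0$. $\mathbf{Z}:=\mathbf{W}\otimes\mathbf{I}_p$, $\tilde{\mathbf{Z}}:=\tilde{\mathbf{W}}\otimes\mathbf{I}_p$, $\mathbf{U}:=(\tilde{\mathbf{Z}}-\mathbf{Z})^{1/2}$;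 $\gamma$ is the smallest eigenvalue of $\tilde{\mathbf{Z}}$. DSA: stepsize $\alpha>0$, initial $\mathbf{x}_n^0$, $\mathbf{y}_{n,i}^0=\mathbf{x}_n^0$. At each $t\ge0$ node $n$ draws $i_n^t$ uniformly from $\{1,\dots,q_n\}$ independently of the past, sets $\hat{\mathbf{g}}_n^t:=\nabla f_{n,i_n^t}(\mathbf{x}_n^t)-\nabla f_{n,i_n^t}(\mathbf{y}_{n,i_n^t}^t)+\frac1{q_n}\sum_{i}\nabla f_{n,i}(\mathbf{y}_{n,i}^t)$, and $\mathbf{y}_{n,i}^{t+1}=\mathbf{x}_n^t$ if $i=i_n^t$, else $\mathbf{y}_{n,i}^{t+1}=\mathbf{y}_{n,i}^t$. With $\hat{\mathbf{g}}^t:=[\hat{\mathbf{g}}_1^t;\dots;\hat{\mathbf{g}}_N^t]$: $\mathbf{x}^1=\mathbf{Z}\mathbf{x}^0-\alpha\hat{\mathbf{g}}^0$, $\mathbf{x}^{t+1}=(\mathbf{I}+\mathbf{Z})\mathbf{x}^t-\tilde{\mathbf{Z}}\mathbf{x}^{t-1}-\alpha[\hat{\mathbf{g}}^t-\hat{\mathbf{g}}^{t-1}]$ for $t\ge1$. Dual variables $\mathbf{v}^t:=\sum_{s=0}^t\mathbf{U}\mathbf{x}^s$; $\mathbf{v}^*$ is the vector in the column space of $\mathbf{U}$ with $\alpha\nabla f(\mathbf{x}^* )+\mathbf{U}\mathbf{v}^*=\mathbf{0}$. $\mathbf{u}^t:=[\mathbf{x}^t;\mathbf{v}^t]$, $\mathbf{u}^*:=[\mathbf{x}^*;\mathbf{v}^*]$,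 $\mathbf{G}:=\mathrm{diag}(\tilde{\mathbf{Z}},\mathbf{I})$, $\|\mathbf{z}\|_{\mathbf{G}}^2:=\mathbf{z}^T\mathbf{G}\mathbf{z}$. $\mathcal{F}^t$ is the sigma-algebra of the history up to time $t$. Define $$p^t:=\sum_{n=1}^N\frac1{q_n}\sum_{i=1}^{q_n}\left(f_{n,i}(\mathbf{y}_{n,i}^t)-f_{n,i}(\tilde{\mathbf{x}}^* )-\nabla f_{n,i}(\tilde{\mathbf{x}}^* )^T(\mathbf{y}_{n,i}^t-\tilde{\mathbf{x}}^* )\right).$$ *)

theory Defs
  imports "HOL-Analysis.Analysis" "HOL-Probability.Probability"
begin

definition strongly_convex_on :: "'a::real_inner set \<Rightarrow> real \<Rightarrow> ('a \<Rightarrow> real) \<Rightarrow> bool" where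
  "strongly_convex_on S mu f \<longleftrightarrow> convex_on S (\<lambda>x. f x - mu / 2 * (norm x)\<^sup>2)"

text \<open>Network vectors x = [x_1; ...; x_N] in R^{Np} are elements of real^'p^'n.
  Kronecker action (A tensor I_p) x.\<close>
definition Zop :: "real^'n^'n \<Rightarrow> real^'p^'n \<Rightarrow> real^'p^'n" where
  "Zop A x = (\<chi> n. \<Sum>m\<in>UNIV. (A$n$m) *\<^sub>R (x$m))"

definition min_eig_kron :: "real^'n^'n \<Rightarrow> 'p::finite itself \<Rightarrow> real" where
  "min_eig_kron A TYPE_p = Min {lam. \<exists>x::real^'p^'n. x \<noteq> 0 \<and> Zop A x = lam *\<^sub>R x}"

definition dsa_grad :: "('n \<Rightarrow> nat) \<Rightarrow> ('n \<Rightarrow> nat \<Rightarrow> real^'p \<Rightarrow> real^'p) \<Rightarrow> real^'p^'n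
    \<Rightarrow> ('n \<Rightarrow> nat \<Rightarrow> real^'p) \<Rightarrow> ('n \<Rightarrow> nat) \<Rightarrow> real^'p^'n" where
  "dsa_grad q gf x y j = (\<chi> n. gf n (j n) (x$n) - gf n (j n) (y n (j n))
        + (1 / real (q n)) *\<^sub>R (\<Sum>i\<in>{1..q n}. gf n i (y n i)))"

text \<open>State after t steps: (x^{t-1}, x^t, y^t, hat g^{t-1}) (first and last components are
  dummies for t = 0). omega t n is the index i_n^t drawn at time t.\<close>
primrec dsa :: "('n::finite \<Rightarrow> nat) \<Rightarrow> ('n \<Rightarrow> nat \<Rightarrow> real^'p \<Rightarrow> real^'p) \<Rightarrow> real^'n^'n \<Rightarrow> real^'n^'n
    \<Rightarrow> real \<Rightarrow> real^'p^'n \<Rightarrow> (nat \<Rightarrow> 'n \<Rightarrow> nat) \<Rightarrow> nat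
    \<Rightarrow> (real^'p^'n) \<times> (real^'p^'n) \<times> ('n \<Rightarrow> nat \<Rightarrow> real^'p) \<times> (real^'p^'n)" where
  "dsa q gf W Wt alpha x0 omega 0 = (x0, x0, (\<lambda>n i. x0$n), 0)"
| "dsa q gf W Wt alpha x0 omega (Suc t) =
     (case dsa q gf W Wt alpha x0 omega t of (xp, x, y, gp) \<Rightarrow>
        let g = dsa_grad q gf x y (omega t);
            x' = (if t = 0 then Zop W x - alpha *\<^sub>R g
                  else x + Zop W x - Zop Wt xp - alpha *\<^sub>R (g - gp));
            y' = (\<lambda>n i. if i = omega t n then x$n else y n i)
        in (x, x', y', g))"

definition dsa_x where "dsa_x q gf W Wt alpha x0 omega t = fst (snd (dsa q gf W Wt alpha x0 omega t))"
definition dsa_y where "dsa_y q gf W Wt alpha x0 omega t = fst (snd (snd (dsa q gf W Wt alpha x0 omega t)))"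

text \<open>Dual variable v^t = sum_{s=0}^t U x^s.\<close>
definition dsa_v where
  "dsa_v q gf W Wt U alpha x0 omega t = (\<Sum>s\<in>{0..t}. Zop U (dsa_x q gf W Wt alpha x0 omega s))"

definition dsa_p :: "('n::finite \<Rightarrow> nat) \<Rightarrow> ('n \<Rightarrow> nat \<Rightarrow> real^'p \<Rightarrow> real) \<Rightarrow> ('n \<Rightarrow> nat \<Rightarrow> real^'p \<Rightarrow> real^'p)
    \<Rightarrow> real^'n^'n \<Rightarrow> real^'n^'n \<Rightarrow> real \<Rightarrow> real^'p^'n \<Rightarrow> real^'p \<Rightarrow> (nat \<Rightarrow> 'n \<Rightarrow> nat) \<Rightarrow> nat \<Rightarrow> real" where
  "dsa_p q f gf W Wt alpha x0 xs omega t =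
     (\<Sum>n\<in>UNIV. (1 / real (q n)) * (\<Sum>i\<in>{1..q n}.
        let yi = dsa_y q gf W Wt alpha x0 omega t n i in
        f n i yi - f n i xs - gf n i xs \<bullet> (yi - xs)))"

text \<open>Lyapunov quantity ||u^t - u^*||_G^2 + c p^t, with G = diag(Zt, I).\<close>
definition dsa_lyap where
  "dsa_lyap q f gf W Wt U alpha c x0 xs vs omega t =
     (let dx = dsa_x q gf W Wt alpha x0 omega t - (\<chi> n. xs);
          dv = dsa_v q gf W Wt U alpha x0 omega t - vs
      in dx \<bullet> Zop Wt dx + (norm dv)\<^sup>2 + c * dsa_p q f gf W Wt alpha x0 xs omega t)"

end

theory Submission
  imports Defs
begin

text \<open>Write e = x - x*, v for the dual error and d = g - \<nabla>f(x*) for the gradient-estimate error.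
  In terms of the dual variable, a DSA step is the primal-dual recursion
  e' = Wt e - alpha d - U v, v' = v + U e'. Since U^2 = Wt - W and W \<le> Wt \<le> (I + W)/2, the energy
  |e|_Wt^2 + |v|^2 decreases by (gamma - alpha eta)|e' - e|^2 + 2 alpha d\<bullet>e - (alpha/eta)|d|^2.
  Averaging over the uniformly drawn indices, strong convexity bounds E[d\<bullet>e] from below,
  co-coercivity bounds the SAGA second moment E|d|^2 by 4L(F + p) - mu^2|e|^2, where F is the
  average Bregman divergence at x, and the table update gives E[p'] - p \<le> F/qmin - p/qmax.
  The bounds on eta, alpha and c make the resulting residual nonpositive with a margin, which
  absorbs a small multiple delta of the Lyapunov function; the dual error |v| is controlled by
  |U v| because v stays in the range of U.\<close>

section \<open>Smooth strongly convex functions and Bregman divergences\<close>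

definition bregman :: "('a::real_inner \<Rightarrow> real) \<Rightarrow> ('a \<Rightarrow> 'a) \<Rightarrow> 'a \<Rightarrow> 'a \<Rightarrow> real" where
  "bregman f g x y = f y - f x - g x \<bullet> (y - x)"

lemma has_real_derivative_along_line:
  fixes f :: "'a::real_inner \<Rightarrow> real"
  assumes "\<forall>z. (f has_derivative (\<lambda>h. g z \<bullet> h)) (at z)"
  shows "((\<lambda>t. f (x + t *\<^sub>R w)) has_real_derivative (g (x + t *\<^sub>R w) \<bullet> w)) (at t)"
proof -
  have "((\<lambda>t. x + t *\<^sub>R w) has_derivative (\<lambda>h. h *\<^sub>R w)) (at t)"
    by (auto intro!: derivative_eq_intros)
  from has_derivative_compose[OF this assms[rule_format, of "x + t *\<^sub>R w"]]
  have "((\<lambda>t. f (x + t *\<^sub>R w)) has_derivative (\<lambda>h. h * (g (x + t *\<^sub>R w) \<bullet> w))) (at t)"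
    by simp
  moreover have "(\<lambda>h. h * (g (x + t *\<^sub>R w) \<bullet> w)) = (*) (g (x + t *\<^sub>R w) \<bullet> w)"
    by (auto simp: mult.commute)
  ultimately show ?thesis by (simp add: has_field_derivative_def)
qed

lemma bregman_le_lipschitz_gradient:
  fixes f :: "'a::real_inner \<Rightarrow> real"
  assumes d: "\<forall>z. (f has_derivative (\<lambda>h. g z \<bullet> h)) (at z)"
    and l: "L-lipschitz_on UNIV g"
  shows "bregman f g x y \<le> L / 2 * (norm (y - x))\<^sup>2"
proof -
  define w where "w = y - x"
  define h where "h s = f (x + s *\<^sub>R w) - s * (g x \<bullet> w) - L / 2 * s\<^sup>2 * (norm w)\<^sup>2" for s
  have "h 1 \<le> h 0"
  proof (rule DERIV_nonpos_imp_nonincreasing[of 0 1 h])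
    fix s :: real assume s: "0 \<le> s" "s \<le> 1"
    have "(h has_real_derivative ((g (x + s *\<^sub>R w) - g x) \<bullet> w - L * s * (norm w)\<^sup>2)) (at s)"
      unfolding h_def
      by (rule has_real_derivative_along_line[OF d] derivative_eq_intros refl
          | simp add: inner_diff_left)+
    moreover have "(g (x + s *\<^sub>R w) - g x) \<bullet> w \<le> L * s * (norm w)\<^sup>2"
    proof -
      have "(g (x + s *\<^sub>R w) - g x) \<bullet> w \<le> norm (g (x + s *\<^sub>R w) - g x) * norm w"
        by (rule norm_cauchy_schwarz)
      also have "\<dots> \<le> L * norm (s *\<^sub>R w) * norm w"
        using lipschitz_onD[OF l, of "x + s *\<^sub>R w" x] by (simp add: dist_norm mult_right_mono)
      also have "\<dots> = L * s * (norm w)\<^sup>2" using s by (simp add: power2_eq_square)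
      finally show ?thesis .
    qed
    ultimately show "\<exists>y. DERIV h s :> y \<and> y \<le> 0" by (intro exI conjI) auto
  qed simp
  thus ?thesis by (simp add: h_def w_def bregman_def)
qed

lemma bregman_ge_strongly_convex:
  fixes f :: "'a::real_inner \<Rightarrow> real"
  assumes d: "\<forall>z. (f has_derivative (\<lambda>h. g z \<bullet> h)) (at z)"
    and sc: "strongly_convex_on UNIV mu f"
  shows "mu / 2 * (norm (y - x))\<^sup>2 \<le> bregman f g x y"
proof -
  define w where "w = y - x"
  define phi where "phi t = f (x + t *\<^sub>R w) - mu / 2 * (norm (x + t *\<^sub>R w))\<^sup>2" for t
  have cv: "convex_on UNIV (\<lambda>z. f z - mu / 2 * (norm z)\<^sup>2)"
    using sc by (simp add: strongly_convex_on_def)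
  have "convex_on UNIV phi"
  proof (rule convex_onI)
    fix r s t :: real assume r: "0 < r" "r < 1"
    have "x + ((1 - r) * s + r * t) *\<^sub>R w = (1 - r) *\<^sub>R (x + s *\<^sub>R w) + r *\<^sub>R (x + t *\<^sub>R w)"
      by (simp add: algebra_simps flip: scaleR_add_left)
    then show "phi ((1 - r) *\<^sub>R s + r *\<^sub>R t) \<le> (1 - r) * phi s + r * phi t"
      using convex_onD[OF cv, of r "x + s *\<^sub>R w" "x + t *\<^sub>R w"] r unfolding phi_def by simp
  qed simp
  moreover have "(phi has_real_derivative (g x \<bullet> w - mu * (x \<bullet> w))) (at 0)"
  proof -
    have n: "(norm (x + t *\<^sub>R w))\<^sup>2 = x \<bullet> x + 2 * t * (x \<bullet> w) + t\<^sup>2 * (w \<bullet> w)" for t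
      unfolding power2_norm_eq_inner
      by (simp add: inner_add_left inner_add_right inner_commute power2_eq_square algebra_simps)
    have "(phi has_real_derivative
        (g (x + 0 *\<^sub>R w) \<bullet> w - mu / 2 * (0 + 2 * 1 * (x \<bullet> w) + 2 * 0 * (w \<bullet> w)))) (at 0)"
      unfolding phi_def n
      by (rule has_real_derivative_along_line[OF d] derivative_eq_intros refl | simp)+
    thus ?thesis by (simp add: algebra_simps)
  qed
  ultimately have "(g x \<bullet> w - mu * (x \<bullet> w)) * (1 - 0) \<le> phi 1 - phi 0"
    by (intro convex_on_imp_above_tangent[where A=UNIV]) auto
  moreover have "(norm y)\<^sup>2 = (norm x)\<^sup>2 + 2 * (x \<bullet> w) + (norm w)\<^sup>2"
    unfolding w_def power2_norm_eq_inner by (simp add: inner_diff_left inner_diff_right inner_commute)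
  ultimately show ?thesis
    unfolding phi_def bregman_def w_def by (simp add: algebra_simps)
qed

text \<open>Co-coercivity: compare f at x and at the gradient step
  y - (1/L)(g y - g x), using the strong convexity bound at x and the descent bound at y.\<close>
lemma gradient_diff_sq_le_bregman:
  fixes f :: "'a::real_inner \<Rightarrow> real"
  assumes d: "\<forall>z. (f has_derivative (\<lambda>h. g z \<bullet> h)) (at z)"
    and l: "L-lipschitz_on UNIV g" and sc: "strongly_convex_on UNIV mu f"
    and mu: "0 \<le> mu" and L: "0 < L"
  shows "(norm (g y - g x))\<^sup>2 \<le> 2 * L * bregman f g x y"
proof -
  define G where "G = g y - g x"
  define z where "z = y - (1 / L) *\<^sub>R G"
  have "0 \<le> bregman f g x z"
    using order_trans[OF _ bregman_ge_strongly_convex[OF d sc, of z x]] mu by simp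
  moreover have "bregman f g y z \<le> (1 / (2 * L)) * (norm G)\<^sup>2"
  proof -
    have "L / 2 * (norm (z - y))\<^sup>2 = (1 / (2 * L)) * (norm G)\<^sup>2"
      using L by (simp add: z_def power_divide power2_eq_square)
    with bregman_le_lipschitz_gradient[OF d l, of y z] show ?thesis by simp
  qed
  moreover have "bregman f g x z = bregman f g x y + bregman f g y z - (1 / L) * (norm G)\<^sup>2"
    unfolding bregman_def G_def z_def
    by (simp add: inner_diff_left inner_diff_right power2_norm_eq_inner algebra_simps)
  ultimately have "(1 / (2 * L)) * (norm G)\<^sup>2 \<le> bregman f g x y"
    by (simp add: field_simps)
  thus ?thesis using L unfolding G_def by (simp add: field_simps)
qed

lemma bregman_le_inner_gradient_diff:
  fixes f :: "'a::real_inner \<Rightarrow> real"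
  assumes d: "\<forall>z. (f has_derivative (\<lambda>h. g z \<bullet> h)) (at z)"
    and sc: "strongly_convex_on UNIV mu f"
  shows "bregman f g x y + mu / 2 * (norm (y - x))\<^sup>2 \<le> (g y - g x) \<bullet> (y - x)"
proof -
  have "bregman f g x y + bregman f g y x = (g y - g x) \<bullet> (y - x)"
    unfolding bregman_def by (simp add: inner_diff_left inner_diff_right algebra_simps)
  moreover have "mu / 2 * (norm (y - x))\<^sup>2 \<le> bregman f g y x"
    using bregman_ge_strongly_convex[OF d sc, of x y] by (simp add: norm_minus_commute)
  ultimately show ?thesis by linarith
qed

lemma norm_le_of_strongly_monotone:
  fixes a e :: "'a::real_inner"
  assumes "mu * (norm e)\<^sup>2 \<le> a \<bullet> e" "0 \<le> mu"
  shows "mu\<^sup>2 * (norm e)\<^sup>2 \<le> (norm a)\<^sup>2"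
proof -
  have "mu * (norm e)\<^sup>2 \<le> norm a * norm e" using assms(1) norm_cauchy_schwarz[of a e] by linarith
  hence "mu * norm e \<le> norm a"
    using assms(2) by (cases "norm e = 0") (auto simp: power2_eq_square)
  hence "(mu * norm e)\<^sup>2 \<le> (norm a)\<^sup>2" using assms(2) by (intro power_mono) auto
  thus ?thesis by (simp add: power_mult_distrib)
qed

definition smooth_strongly_convex :: "real \<Rightarrow> real \<Rightarrow> ('a::real_inner \<Rightarrow> real) \<Rightarrow> ('a \<Rightarrow> 'a) \<Rightarrow> bool" where
  "smooth_strongly_convex mu L f g \<longleftrightarrow>
     (\<forall>z. (f has_derivative (\<lambda>h. g z \<bullet> h)) (at z)) \<and> L-lipschitz_on UNIV g \<and>
     strongly_convex_on UNIV mu f"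

lemma smooth_strongly_convexD:
  assumes "smooth_strongly_convex mu L f g"
  shows "\<forall>z. (f has_derivative (\<lambda>h. g z \<bullet> h)) (at z)" "L-lipschitz_on UNIV g"
    and "strongly_convex_on UNIV mu f"
  using assms by (simp_all add: smooth_strongly_convex_def)

lemma bregman_nonneg:
  assumes "smooth_strongly_convex mu L f g" "0 \<le> mu"
  shows "0 \<le> bregman f g x y"
proof -
  have "0 \<le> mu / 2 * (norm (y - x))\<^sup>2" using assms(2) by simp
  also have "\<dots> \<le> bregman f g x y"
    using bregman_ge_strongly_convex smooth_strongly_convexD(1,3)[OF assms(1)] .
  finally show ?thesis .
qed

lemma strong_convexity_le_lipschitz:
  fixes f :: "'a::real_inner \<Rightarrow> real" and u :: 'a
  assumes "smooth_strongly_convex mu L f g" and "u \<noteq> 0"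
  shows "mu \<le> L"
proof -
  have "mu / 2 * (norm u)\<^sup>2 \<le> L / 2 * (norm u)\<^sup>2"
    using bregman_ge_strongly_convex[of f g mu u 0] bregman_le_lipschitz_gradient[of f g L 0 u]
      smooth_strongly_convexD[OF assms(1)] by simp
  thus ?thesis using assms(2) by simp
qed

section \<open>Means over finite index sets\<close>

definition mean :: "'i set \<Rightarrow> ('i \<Rightarrow> 'a::real_vector) \<Rightarrow> 'a" where
  "mean I h = (1 / real (card I)) *\<^sub>R (\<Sum>i\<in>I. h i)"

lemma mean_const: "finite I \<Longrightarrow> I \<noteq> {} \<Longrightarrow> mean I (\<lambda>_. c) = c"
  by (simp add: mean_def sum_constant_scaleR)

lemma mean_add: "mean I (\<lambda>i. u i + v i) = mean I u + mean I v"
  by (simp add: mean_def sum.distrib scaleR_add_right)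

lemma mean_diff: "mean I (\<lambda>i. u i - v i) = mean I u - mean I v"
  by (simp add: mean_def sum_subtractf scaleR_diff_right)

lemma mean_scale: "mean I (\<lambda>i. c * u i) = c * mean I (u :: _ \<Rightarrow> real)"
  by (simp add: mean_def sum_distrib_left)

lemma mean_scale_right: "mean I (\<lambda>i. u i * c) = mean I (u :: _ \<Rightarrow> real) * c"
  by (simp add: mean_def sum_distrib_right)

lemma mean_divide: "mean I (\<lambda>i. u i / c) = mean I (u :: _ \<Rightarrow> real) / c"
  by (simp add: mean_def sum_divide_distrib mult.commute)

lemma inner_mean_left: "mean I u \<bullet> e = mean I (\<lambda>i. u i \<bullet> e)"
  by (simp add: mean_def inner_sum_left)

lemma mean_mono: "(\<And>i. i \<in> I \<Longrightarrow> u i \<le> v i) \<Longrightarrow> mean I u \<le> mean I (v :: _ \<Rightarrow> real)"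
  by (simp add: mean_def sum_mono divide_right_mono)

lemma mean_nonneg: "(\<And>i. i \<in> I \<Longrightarrow> 0 \<le> u i) \<Longrightarrow> 0 \<le> mean I (u :: _ \<Rightarrow> real)"
  by (simp add: mean_def sum_nonneg)

lemma mean_norm_sq_eq_variance:
  fixes z :: "'i \<Rightarrow> 'a::real_inner"
  assumes "finite I" "I \<noteq> {}"
  shows "mean I (\<lambda>i. (norm (z i))\<^sup>2) = mean I (\<lambda>i. (norm (z i - mean I z))\<^sup>2) + (norm (mean I z))\<^sup>2"
proof -
  have "(norm (z i - mean I z))\<^sup>2 = (norm (z i))\<^sup>2 - 2 * (z i \<bullet> mean I z) + (norm (mean I z))\<^sup>2" for i
    by (simp add: power2_norm_eq_inner inner_diff_left inner_diff_right inner_commute)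
  hence "mean I (\<lambda>i. (norm (z i - mean I z))\<^sup>2)
      = mean I (\<lambda>i. (norm (z i))\<^sup>2) - 2 * (mean I z \<bullet> mean I z) + (norm (mean I z))\<^sup>2"
    using assms by (simp add: mean_add mean_diff mean_scale mean_const inner_mean_left)
  thus ?thesis by (simp add: power2_norm_eq_inner)
qed

lemma norm_diff_sq_le: "(norm (u - v :: 'a::real_inner))\<^sup>2 \<le> 2 * (norm u)\<^sup>2 + 2 * (norm v)\<^sup>2"
proof -
  have "(norm (u - v))\<^sup>2 + (norm (u + v))\<^sup>2 = 2 * (norm u)\<^sup>2 + 2 * (norm v)\<^sup>2"
    unfolding power2_norm_eq_inner
    by (simp add: inner_diff_left inner_diff_right inner_add_left inner_add_right inner_commute)
  thus ?thesis by (metis le_add_same_cancel1 zero_le_power2)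
qed

text \<open>The second moment of the SAGA correction a - b + mean b: its mean is mean a, and
  its variance is at most twice the sum of the variances of a and b.\<close>
lemma mean_norm_sq_saga_le:
  fixes a b :: "'i \<Rightarrow> 'a::real_inner"
  assumes I: "finite I" "I \<noteq> {}"
  shows "mean I (\<lambda>i. (norm (a i - b i + mean I b))\<^sup>2)
       \<le> 2 * mean I (\<lambda>i. (norm (a i))\<^sup>2) + 2 * mean I (\<lambda>i. (norm (b i))\<^sup>2) - (norm (mean I a))\<^sup>2"
proof -
  define z where "z = (\<lambda>i. a i - b i + mean I b)"
  have mz: "mean I z = mean I a"
    using I by (simp add: z_def mean_add mean_diff mean_const)
  have "(norm (z i - mean I a))\<^sup>2 \<le> 2 * (norm (a i - mean I a))\<^sup>2 + 2 * (norm (b i - mean I b))\<^sup>2" for i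
    using norm_diff_sq_le[of "a i - mean I a" "b i - mean I b"] by (simp add: z_def algebra_simps)
  hence "mean I (\<lambda>i. (norm (z i - mean I a))\<^sup>2)
      \<le> 2 * mean I (\<lambda>i. (norm (a i - mean I a))\<^sup>2) + 2 * mean I (\<lambda>i. (norm (b i - mean I b))\<^sup>2)"
    by (simp add: mean_mono flip: mean_scale mean_add)
  moreover have "mean I (\<lambda>i. (norm (z i))\<^sup>2)
      = mean I (\<lambda>i. (norm (z i - mean I a))\<^sup>2) + (norm (mean I a))\<^sup>2"
    using mean_norm_sq_eq_variance[OF I, of z] unfolding mz .
  ultimately show ?thesis
    using mean_norm_sq_eq_variance[OF I, of a] mean_norm_sq_eq_variance[OF I, of b]
      zero_le_power2[of "norm (mean I b)"]
    unfolding z_def by linarith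
qed

lemma mean_cong: "(\<And>i. i \<in> I \<Longrightarrow> u i = v i) \<Longrightarrow> mean I u = mean I v"
  by (simp add: mean_def)

lemma mean_swap: "mean I (\<lambda>l. mean I (\<lambda>i. h i l)) = mean I (\<lambda>i. mean I (\<lambda>l. h i l))"
  unfolding mean_def scaleR_sum_right[symmetric] by (subst sum.swap) (rule refl)

text \<open>Refreshing the table entry of a uniformly drawn index l replaces one of the k stored
  values by the current one, on average.\<close>
lemma mean_after_uniform_refresh:
  fixes u w :: "'i \<Rightarrow> real"
  assumes "finite I"
  shows "mean I (\<lambda>l. mean I (\<lambda>i. if i = l then u i else w i))
    = mean I u / real (card I) + (1 - 1 / real (card I)) * mean I w"
proof -
  define k where "k = real (card I)"
  have "mean I (\<lambda>l. if i = l then u i else w i) = (1 / k) * u i + (1 - 1 / k) * w i"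
    if i: "i \<in> I" for i
  proof -
    have "(\<Sum>l\<in>I. if i = l then u i else w i) = u i + (\<Sum>l\<in>I - {i}. if i = l then u i else w i)"
      using i assms by (simp add: sum.remove)
    also have "(\<Sum>l\<in>I - {i}. if i = l then u i else w i) = (\<Sum>l\<in>I - {i}. w i)"
      by (intro sum.cong) auto
    also have "\<dots> = (k - 1) * w i"
    proof -
      have "1 \<le> card I" using i assms card_0_eq by fastforce
      thus ?thesis using i assms by (simp add: k_def of_nat_diff)
    qed
    finally have "(\<Sum>l\<in>I. if i = l then u i else w i) = u i + (k - 1) * w i" .
    moreover have "0 < k" using i assms card_gt_0_iff unfolding k_def by fastforce
    ultimately show ?thesis unfolding mean_def k_def[symmetric] by (simp add: field_simps)
  qed
  hence "mean I (\<lambda>i. mean I (\<lambda>l. if i = l then u i else w i))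
      = mean I (\<lambda>i. (1 / k) * u i + (1 - 1 / k) * w i)"
    by (rule mean_cong)
  also have "\<dots> = (1 / k) * mean I u + (1 - 1 / k) * mean I w"
    by (simp only: mean_add mean_scale)
  finally show ?thesis by (subst mean_swap) (simp add: k_def)
qed

lemma expectation_pmf_of_set_eq_mean:
  "finite S \<Longrightarrow> S \<noteq> {} \<Longrightarrow> measure_pmf.expectation (pmf_of_set S) h = mean S (h :: _ \<Rightarrow> real)"
  by (simp add: integral_pmf_of_set mean_def)

lemma mean_sum: "finite N \<Longrightarrow> mean I (\<lambda>i. \<Sum>n\<in>N. h n i) = (\<Sum>n\<in>N. mean I (h n))"
  unfolding mean_def scaleR_sum_right[symmetric] by (subst sum.swap) (rule refl)

lemma mean_PiE_component:
  fixes B :: "'n::finite \<Rightarrow> 'b set"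
  assumes fin: "\<And>n. finite (B n)" and ne: "\<And>n. B n \<noteq> {}"
  shows "mean (PiE UNIV B) (\<lambda>j. psi (j n)) = mean (B n) (psi :: _ \<Rightarrow> real)"
proof -
  have "PiE_dflt UNIV undefined B = PiE UNIV B" by (auto simp: PiE_dflt_def PiE_def extensional_def)
  hence "pmf_of_set (PiE UNIV B) = Pi_pmf UNIV undefined (\<lambda>n. pmf_of_set (B n))"
    using Pi_pmf_of_set[of UNIV B undefined] fin ne by simp
  hence "map_pmf (\<lambda>j. j n) (pmf_of_set (PiE UNIV B)) = pmf_of_set (B n)"
    by (simp add: Pi_pmf_component)
  hence "measure_pmf.expectation (pmf_of_set (PiE UNIV B)) (\<lambda>j. psi (j n))
      = measure_pmf.expectation (pmf_of_set (B n)) psi"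
    by (metis integral_map_pmf)
  moreover have "finite (PiE UNIV B)" "PiE UNIV B \<noteq> {}"
    using fin ne by (simp_all add: finite_PiE PiE_eq_empty_iff)
  ultimately show ?thesis using fin ne by (simp add: expectation_pmf_of_set_eq_mean)
qed

lemma mean_PiE_sum:
  fixes B :: "'n::finite \<Rightarrow> 'b set"
  assumes "\<And>n. finite (B n)" and "\<And>n. B n \<noteq> {}"
  shows "mean (PiE UNIV B) (\<lambda>j. \<Sum>n\<in>UNIV. psi n (j n)) = (\<Sum>n\<in>UNIV. mean (B n) (psi n :: _ \<Rightarrow> real))"
  by (simp add: mean_sum) (intro sum.cong refl mean_PiE_component assms)

section \<open>The SAGA gradient estimate at one node\<close>

lemma saga_inner_bound:
  fixes f :: "'i \<Rightarrow> 'a::real_inner \<Rightarrow> real" and xs :: 'a and y :: "'i \<Rightarrow> 'a"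
  assumes I: "finite I" "I \<noteq> {}"
    and sc: "\<And>i. i \<in> I \<Longrightarrow> smooth_strongly_convex mu L (f i) (g i)"
  defines "b \<equiv> \<lambda>i. g i (y i) - g i xs"
  shows "mean I (\<lambda>i. bregman (f i) (g i) xs x) + mu / 2 * (norm (x - xs))\<^sup>2
    \<le> mean I (\<lambda>i. (g i x - g i xs - b i + mean I b) \<bullet> (x - xs))"
proof -
  have "mean I (\<lambda>i. (g i x - g i xs - b i + mean I b) \<bullet> (x - xs))
      = mean I (\<lambda>i. (g i x - g i xs) \<bullet> (x - xs))"
    using I by (simp add: inner_diff_left inner_add_left mean_add mean_diff mean_const inner_mean_left)
  moreover have "mean I (\<lambda>i. bregman (f i) (g i) xs x + mu / 2 * (norm (x - xs))\<^sup>2)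
      \<le> mean I (\<lambda>i. (g i x - g i xs) \<bullet> (x - xs))"
    using bregman_le_inner_gradient_diff[OF smooth_strongly_convexD(1,3)[OF sc]] by (rule mean_mono)
  ultimately show ?thesis using I by (simp add: mean_add mean_const)
qed

lemma saga_second_moment_bound:
  fixes f :: "'i \<Rightarrow> 'a::real_inner \<Rightarrow> real" and xs :: 'a and y :: "'i \<Rightarrow> 'a"
  assumes I: "finite I" "I \<noteq> {}"
    and sc: "\<And>i. i \<in> I \<Longrightarrow> smooth_strongly_convex mu L (f i) (g i)"
    and mu: "0 \<le> mu" and L: "0 < L"
  defines "b \<equiv> \<lambda>i. g i (y i) - g i xs"
  shows "mean I (\<lambda>i. (norm (g i x - g i xs - b i + mean I b))\<^sup>2)
    \<le> 4 * L * mean I (\<lambda>i. bregman (f i) (g i) xs x)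
      + 4 * L * mean I (\<lambda>i. bregman (f i) (g i) xs (y i)) - mu\<^sup>2 * (norm (x - xs))\<^sup>2"
proof -
  define a where "a i = g i x - g i xs" for i
  have cocoercive: "(norm (g i z - g i xs))\<^sup>2 \<le> 2 * L * bregman (f i) (g i) xs z" if "i \<in> I" for i z
    using gradient_diff_sq_le_bregman smooth_strongly_convexD[OF sc[OF that]] mu L .
  have "mean I (\<lambda>i. (norm (a i))\<^sup>2) \<le> 2 * L * mean I (\<lambda>i. bregman (f i) (g i) xs x)"
    unfolding a_def using cocoercive by (simp add: mean_mono flip: mean_scale)
  moreover have "mean I (\<lambda>i. (norm (b i))\<^sup>2) \<le> 2 * L * mean I (\<lambda>i. bregman (f i) (g i) xs (y i))"
    unfolding b_def using cocoercive by (simp add: mean_mono flip: mean_scale)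
  moreover have "mu\<^sup>2 * (norm (x - xs))\<^sup>2 \<le> (norm (mean I a))\<^sup>2"
  proof (rule norm_le_of_strongly_monotone[OF _ mu])
    have "mu * (norm (x - xs))\<^sup>2 \<le> a i \<bullet> (x - xs)" if "i \<in> I" for i
      using bregman_le_inner_gradient_diff[OF smooth_strongly_convexD(1,3)[OF sc[OF that]], of xs x]
        bregman_ge_strongly_convex[OF smooth_strongly_convexD(1,3)[OF sc[OF that]], of x xs]
      unfolding a_def by linarith
    hence "mean I (\<lambda>i. mu * (norm (x - xs))\<^sup>2) \<le> mean I (\<lambda>i. a i \<bullet> (x - xs))"
      by (rule mean_mono)
    thus "mu * (norm (x - xs))\<^sup>2 \<le> mean I a \<bullet> (x - xs)"
      using I by (simp add: mean_const inner_mean_left)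
  qed
  ultimately show ?thesis
    using mean_norm_sq_saga_le[OF I, of a b] unfolding a_def by linarith
qed

section \<open>Kronecker operators A \<otimes> I_p\<close>

lemma Zop_nth: "Zop A x $ n = (\<Sum>m\<in>UNIV. A$n$m *\<^sub>R x$m)"
  by (simp add: Zop_def)

lemma Zop_add: "Zop A (x + y) = Zop A x + Zop A y"
  by (simp add: Zop_def vec_eq_iff scaleR_add_right sum.distrib)

lemma Zop_diff: "Zop A (x - y) = Zop A x - Zop A y"
  by (simp add: Zop_def vec_eq_iff scaleR_diff_right sum_subtractf)

lemma Zop_scaleR: "Zop A (c *\<^sub>R x) = c *\<^sub>R Zop A x"
  by (simp add: Zop_def vec_eq_iff scaleR_sum_right mult_ac)

lemma linear_Zop: "linear (Zop A)"
  by (rule linearI) (simp_all add: Zop_add Zop_scaleR)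

lemma bounded_linear_Zop: "bounded_linear (Zop (A :: real^'n::finite^'n) :: real^'p::finite^'n \<Rightarrow> _)"
  using linear_Zop linear_conv_bounded_linear by blast

lemma Zop_zero: "Zop A 0 = 0"
  by (simp add: Zop_def vec_eq_iff)

lemma Zop_sum: "finite S \<Longrightarrow> Zop A (\<Sum>s\<in>S. x s) = (\<Sum>s\<in>S. Zop A (x s))"
  by (induction S rule: finite_induct) (auto simp: Zop_zero Zop_add)

lemma Zop_mat_add: "Zop (A + B) x = Zop A x + Zop B x"
  by (simp add: Zop_def vec_eq_iff scaleR_add_left sum.distrib)

lemma Zop_mat_diff: "Zop (A - B) x = Zop A x - Zop B x"
  by (simp add: Zop_def vec_eq_iff scaleR_diff_left sum_subtractf)

lemma Zop_mat_scaleR: "Zop (c *\<^sub>R A) x = c *\<^sub>R Zop A x"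
  by (simp add: Zop_def vec_eq_iff scaleR_sum_right)

lemma Zop_mat_1: "Zop (mat 1) x = x"
proof -
  have "(\<Sum>m\<in>UNIV. mat 1 $ n $ m *\<^sub>R x $ m) = (\<Sum>m\<in>UNIV. if n = m then x $ m else 0)" for n
    by (intro sum.cong refl) (simp add: mat_def)
  thus ?thesis by (simp add: Zop_def vec_eq_iff)
qed

lemma Zop_Zop: "Zop A (Zop B x) = Zop (A ** B) x"
proof -
  have "(\<Sum>m\<in>UNIV. A$n$m *\<^sub>R (\<Sum>k\<in>UNIV. B$m$k *\<^sub>R x$k))
     = (\<Sum>k\<in>UNIV. (\<Sum>m\<in>UNIV. A$n$m * B$m$k) *\<^sub>R x$k)" for n
    by (simp add: scaleR_sum_right scaleR_sum_left) (rule sum.swap)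
  thus ?thesis by (simp add: Zop_def vec_eq_iff matrix_matrix_mult_def)
qed

lemma Zop_symmetric:
  assumes "transpose A = A"
  shows "Zop A x \<bullet> y = x \<bullet> Zop A y"
proof -
  have A: "A$n$m = A$m$n" for n m
    using arg_cong[OF assms, of "\<lambda>M. M $ m $ n"] by (simp add: transpose_def)
  have "Zop A x \<bullet> y = (\<Sum>n\<in>UNIV. \<Sum>m\<in>UNIV. A$n$m * (x$m \<bullet> y$n))"
    unfolding inner_vec_def[of "Zop A x" y] Zop_nth by (simp only: inner_sum_left inner_scaleR_left)
  also have "\<dots> = (\<Sum>m\<in>UNIV. \<Sum>n\<in>UNIV. A$m$n * (x$m \<bullet> y$n))"
    by (subst sum.swap) (simp only: A)
  also have "\<dots> = x \<bullet> Zop A y"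
    unfolding inner_vec_def[of x "Zop A y"] Zop_nth by (simp only: inner_sum_right inner_scaleR_right)
  finally show ?thesis .
qed

lemma Zop_const:
  assumes "A *v vec 1 = vec 1"
  shows "Zop A (\<chi> n. c) = (\<chi> n. c)"
proof -
  have "(\<Sum>m\<in>UNIV. A$n$m) = 1" for n
    using assms by (simp add: vec_eq_iff matrix_vector_mult_def)
  thus ?thesis by (simp add: Zop_def vec_eq_iff flip: scaleR_sum_left)
qed

lemma Zop_quadratic_form: "x \<bullet> Zop A x = (\<Sum>k\<in>UNIV. (\<chi> n. x$n$k) \<bullet> (A *v (\<chi> n. x$n$k)))"
proof -
  have "x \<bullet> Zop A x = (\<Sum>n\<in>UNIV. \<Sum>k\<in>UNIV. x$n$k * (\<Sum>m\<in>UNIV. A$n$m * x$m$k))"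
    by (simp add: Zop_def inner_vec_def)
  also have "\<dots> = (\<Sum>k\<in>UNIV. \<Sum>n\<in>UNIV. x$n$k * (\<Sum>m\<in>UNIV. A$n$m * x$m$k))"
    by (rule sum.swap)
  finally show ?thesis by (simp add: inner_vec_def matrix_vector_mult_def)
qed

lemma Zop_quadratic_form_mono:
  assumes "\<And>z. z \<bullet> (A *v z) \<le> z \<bullet> (B *v z)"
  shows "x \<bullet> Zop A x \<le> x \<bullet> Zop B x"
  unfolding Zop_quadratic_form using assms by (intro sum_mono)

lemma finite_Zop_eigenvalues:
  assumes sym: "transpose A = A"
  shows "finite {lam. \<exists>x::real^'p::finite^'n::finite. x \<noteq> 0 \<and> Zop A x = lam *\<^sub>R x}"
proof -
  define E where "E = {lam. \<exists>x::real^'p^'n. x \<noteq> 0 \<and> Zop A x = lam *\<^sub>R x}"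
  define ev where "ev lam = (SOME x::real^'p^'n. x \<noteq> 0 \<and> Zop A x = lam *\<^sub>R x)" for lam
  have ev: "ev lam \<noteq> 0 \<and> Zop A (ev lam) = lam *\<^sub>R ev lam" if "lam \<in> E" for lam
    using that unfolding E_def ev_def by (metis (mono_tags, lifting) mem_Collect_eq someI_ex)
  have orth: "ev a \<bullet> ev b = 0" if "a \<in> E" "b \<in> E" "a \<noteq> b" for a b
  proof -
    have "a * (ev a \<bullet> ev b) = b * (ev a \<bullet> ev b)"
      using Zop_symmetric[OF sym, of "ev a" "ev b"] ev[OF that(1)] ev[OF that(2)] by simp
    thus ?thesis using that(3) by simp
  qed
  have "inj_on ev E"
    using ev orth by (intro inj_onI) (metis inner_eq_zero_iff)
  moreover have "independent (ev ` E)"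
    using ev orth by (intro pairwise_orthogonal_independent)
      (auto simp: pairwise_def orthogonal_def)
  ultimately show ?thesis
    using finiteI_independent finite_imageD unfolding E_def by blast
qed

text \<open>A minimiser x0 of the Rayleigh quotient is an eigenvector: otherwise moving from x0 in the
  direction of the residual r = A x0 - m x0 lowers the quotient to first order.\<close>
lemma Rayleigh_minimiser_eigenvector:
  fixes x0 :: "real^'p::finite^'n::finite"
  assumes sym: "transpose A = A" and x0: "norm x0 = 1"
    and lb: "\<And>y::real^'p^'n. (x0 \<bullet> Zop A x0) * (norm y)\<^sup>2 \<le> y \<bullet> Zop A y"
  shows "Zop A x0 = (x0 \<bullet> Zop A x0) *\<^sub>R x0"
proof (rule ccontr)
  define m where "m = x0 \<bullet> Zop A x0"
  define r where "r = Zop A x0 - m *\<^sub>R x0"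
  assume "Zop A x0 \<noteq> (x0 \<bullet> Zop A x0) *\<^sub>R x0"
  hence N0: "0 < r \<bullet> r" unfolding r_def m_def by simp
  define b where "b = r \<bullet> Zop A r - m * (norm r)\<^sup>2"
  have b0: "0 \<le> b" unfolding b_def m_def using lb[of r] by simp
  define s where "s = - (r \<bullet> r) / (b + 1)"
  have x0x0: "x0 \<bullet> x0 = 1" by (metis power2_norm_eq_inner x0 power_one)
  have "m * (norm (x0 + s *\<^sub>R r))\<^sup>2 \<le> (x0 + s *\<^sub>R r) \<bullet> Zop A (x0 + s *\<^sub>R r)"
    unfolding m_def by (rule lb)
  moreover have "(x0 + s *\<^sub>R r) \<bullet> Zop A (x0 + s *\<^sub>R r)
      = m + 2 * s * (r \<bullet> Zop A x0) + s\<^sup>2 * (r \<bullet> Zop A r)"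
  proof -
    have "x0 \<bullet> Zop A r = r \<bullet> Zop A x0"
      using Zop_symmetric[OF sym, of x0 r] by (simp add: inner_commute)
    thus ?thesis unfolding m_def
      by (simp only: Zop_add Zop_scaleR inner_add_left inner_add_right inner_scaleR_left
          inner_scaleR_right) (simp add: power2_eq_square algebra_simps)
  qed
  moreover have "m * (norm (x0 + s *\<^sub>R r))\<^sup>2 = m + 2 * s * (m * (r \<bullet> x0)) + s\<^sup>2 * (m * (norm r)\<^sup>2)"
    using x0x0 unfolding power2_norm_eq_inner
    by (simp add: inner_add_left inner_add_right inner_commute power2_eq_square algebra_simps)
  ultimately have "0 \<le> 2 * s * (r \<bullet> Zop A x0 - m * (r \<bullet> x0)) + s\<^sup>2 * b"
    unfolding b_def right_diff_distrib by linarith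
  moreover have "r \<bullet> Zop A x0 - m * (r \<bullet> x0) = r \<bullet> r"
    by (subst (3) r_def) (simp add: inner_diff_right)
  ultimately have "0 \<le> 2 * s * (r \<bullet> r) + s * (s * b)" by (simp add: power2_eq_square)
  moreover have "s < 0" and "- (r \<bullet> r) < s * b"
    using N0 b0 by (simp_all add: s_def field_simps)
  moreover from this have "s * (s * b) < s * (- (r \<bullet> r))" by (intro mult_strict_left_mono_neg)
  moreover have "s * (r \<bullet> r) < 0" using \<open>s < 0\<close> N0 by (rule mult_neg_pos)
  ultimately show False by linarith
qed

lemma min_eig_kron_le_quadratic_form:
  assumes sym: "transpose A = A"
  shows "min_eig_kron A TYPE('p) * (norm x)\<^sup>2 \<le> x \<bullet> Zop A (x::real^'p::finite^'n::finite)"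
proof -
  define Q where "Q x = x \<bullet> Zop A x" for x :: "real^'p^'n"
  have "continuous_on (sphere 0 1) Q"
    unfolding Q_def using bounded_linear_Zop
    by (intro continuous_intros linear_continuous_on)
  then obtain x0 :: "real^'p^'n" where x0: "norm x0 = 1" and min: "\<And>y. norm y = 1 \<Longrightarrow> Q x0 \<le> Q y"
    using continuous_attains_inf[of "sphere (0::real^'p^'n) 1" Q] by (auto simp: sphere_eq_empty)
  have lb: "Q x0 * (norm y)\<^sup>2 \<le> Q y" for y
  proof (cases "y = 0")
    case False
    have "Q x0 \<le> Q ((1 / norm y) *\<^sub>R y)" using False by (intro min) simp
    also have "\<dots> = Q y / (norm y)\<^sup>2" by (simp add: Q_def Zop_scaleR power2_eq_square)
    finally show ?thesis using False by (simp add: field_simps)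
  qed (simp add: Q_def Zop_zero)
  have "Zop A x0 = Q x0 *\<^sub>R x0"
    using Rayleigh_minimiser_eigenvector[OF sym x0] lb unfolding Q_def by blast
  moreover have "x0 \<noteq> 0" using x0 by auto
  ultimately have "min_eig_kron A TYPE('p) \<le> Q x0"
    unfolding min_eig_kron_def using finite_Zop_eigenvalues[OF sym] by (intro Min_le) auto
  hence "min_eig_kron A TYPE('p) * (norm x)\<^sup>2 \<le> Q x0 * (norm x)\<^sup>2" by (simp add: mult_right_mono)
  also have "\<dots> \<le> Q x" by (rule lb)
  finally show ?thesis unfolding Q_def .
qed

lemma Zop_bounded_below_on_range:
  assumes sym: "transpose U = U"
  shows "\<exists>e>0. \<forall>v\<in>range (Zop U :: real^'p::finite^'n::finite \<Rightarrow> _). e * norm v \<le> norm (Zop U v)"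
proof -
  have sub: "subspace (range (Zop U :: real^'p^'n \<Rightarrow> _))"
    by (rule linear_subspace_image[OF linear_Zop subspace_UNIV])
  have "\<forall>v\<in>range (Zop U :: real^'p^'n \<Rightarrow> _). Zop U v = 0 \<longrightarrow> v = 0"
  proof (intro ballI impI)
    fix v :: "real^'p^'n" assume "v \<in> range (Zop U)" and z: "Zop U v = 0"
    then obtain y where y: "v = Zop U y" by blast
    have "v \<bullet> v = y \<bullet> Zop U v" using Zop_symmetric[OF sym, of y v] y by simp
    thus "v = 0" using z by simp
  qed
  from injective_imp_isometric[OF closed_subspace[OF sub] sub bounded_linear_Zop this]
  show ?thesis by (simp add: mult.commute)
qed

lemma fixes_vec_one_of_null:
  assumes "span {vec 1} \<subseteq> {z. (mat 1 - A) *v z = 0}"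
  shows "A *v vec 1 = (vec 1 :: real^'n::finite)"
proof -
  have "(mat 1 - A) *v vec 1 = (0::real^'n)" using assms span_base[of "vec 1" "{vec 1}"] by auto
  thus ?thesis by (simp add: matrix_vector_mult_diff_rdistrib)
qed

section \<open>One primal-dual step\<close>

lemma inner_le_Young:
  fixes a b :: "'a::real_inner"
  assumes "0 < eta"
  shows "2 * (a \<bullet> b) \<le> (norm a)\<^sup>2 / eta + eta * (norm b)\<^sup>2"
proof -
  have "0 \<le> (norm (a - eta *\<^sub>R b))\<^sup>2 / eta" using assms by simp
  also have "\<dots> = (norm a)\<^sup>2 / eta - 2 * (a \<bullet> b) + eta * (norm b)\<^sup>2"
    using assms unfolding power2_norm_eq_inner
    by (simp add: inner_diff_left inner_diff_right inner_commute power2_eq_square field_simps)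
  finally show ?thesis by simp
qed

lemma primal_dual_energy_step:
  fixes e v d :: "real^'p::finite^'n::finite"
  assumes Wt_sym: "transpose Wt = Wt" and U_sym: "transpose U = U" and U_sq: "U ** U = Wt - W"
    and W_le_Wt: "\<And>z::real^'p^'n. z \<bullet> Zop W z \<le> z \<bullet> Zop Wt z"
    and Wt_le: "\<And>z::real^'p^'n. 2 * (z \<bullet> Zop Wt z) \<le> z \<bullet> z + z \<bullet> Zop W z"
    and gamma: "\<And>z::real^'p^'n. gamma * (norm z)\<^sup>2 \<le> z \<bullet> Zop Wt z"
    and alpha: "0 < alpha" and eta: "0 < eta"
    and e': "e' = Zop Wt e - alpha *\<^sub>R d - Zop U v"
  shows "e' \<bullet> Zop Wt e' + (norm (v + Zop U e'))\<^sup>2 - (e \<bullet> Zop Wt e + (norm v)\<^sup>2)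
     \<le> - (gamma - alpha * eta) * (norm (e' - e))\<^sup>2 - 2 * alpha * (d \<bullet> e) + alpha / eta * (norm d)\<^sup>2"
proof -
  define w where "w = e' - e"
  have dual: "(norm (v + Zop U e'))\<^sup>2
      = (norm v)\<^sup>2 + 2 * (e' \<bullet> Zop Wt e - alpha * (d \<bullet> e') - e' \<bullet> e') + (e' \<bullet> Zop Wt e' - e' \<bullet> Zop W e')"
  proof -
    have "(norm (v + Zop U e'))\<^sup>2 = v \<bullet> v + 2 * (v \<bullet> Zop U e') + Zop U e' \<bullet> Zop U e'"
      unfolding power2_norm_eq_inner by (simp add: inner_add_left inner_add_right inner_commute)
    also have "v \<bullet> Zop U e' = Zop U v \<bullet> e'" using Zop_symmetric[OF U_sym, of v e'] by simp
    also have "Zop U v = Zop Wt e - alpha *\<^sub>R d - e'" unfolding e' by simp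
    also have "Zop U e' \<bullet> Zop U e' = e' \<bullet> Zop U (Zop U e')" by (rule Zop_symmetric[OF U_sym])
    also have "Zop U (Zop U e') = Zop Wt e' - Zop W e'" by (simp add: Zop_Zop U_sq Zop_mat_diff)
    finally show ?thesis
      by (simp add: power2_norm_eq_inner inner_diff_left inner_diff_right inner_commute)
  qed
  have primal: "w \<bullet> Zop Wt w = e' \<bullet> Zop Wt e' - 2 * (e' \<bullet> Zop Wt e) + e \<bullet> Zop Wt e"
  proof -
    have "e \<bullet> Zop Wt e' = e' \<bullet> Zop Wt e"
      using Zop_symmetric[OF Wt_sym, of e e'] by (simp add: inner_commute)
    thus ?thesis unfolding w_def by (simp only: Zop_diff inner_diff_left inner_diff_right)
  qed
  have "alpha * (d \<bullet> e') = alpha * (d \<bullet> e) + alpha * (d \<bullet> w)"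
    by (simp add: w_def inner_diff_right algebra_simps)
  moreover have "- 2 * (alpha * (d \<bullet> w)) \<le> alpha / eta * (norm d)\<^sup>2 + alpha * eta * (norm w)\<^sup>2"
    using mult_left_mono[OF inner_le_Young[OF eta, of d "- w"], of alpha] alpha
    by (simp add: algebra_simps)
  ultimately show ?thesis
    unfolding w_def[symmetric] dual
    using primal W_le_Wt[of e'] Wt_le[of e'] gamma[of w] by (simp add: algebra_simps)
qed

lemma norm_diff3_sq_le:
  "(norm (a - b - c :: 'a::real_inner))\<^sup>2 \<le> 3 * ((norm a)\<^sup>2 + (norm b)\<^sup>2 + (norm c)\<^sup>2)"
proof -
  have "(norm (a - b - c))\<^sup>2 + ((norm (a + b))\<^sup>2 + (norm (a + c))\<^sup>2 + (norm (b - c))\<^sup>2)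
      = 3 * ((norm a)\<^sup>2 + (norm b)\<^sup>2 + (norm c)\<^sup>2)"
    unfolding power2_norm_eq_inner
    by (simp add: inner_diff_left inner_diff_right inner_add_left inner_add_right inner_commute)
  thus ?thesis by (smt (verit) zero_le_power2)
qed

section \<open>The DSA recursion\<close>

lemma dsa_prefix_cong:
  "(\<And>s. s < t \<Longrightarrow> omega' s = omega s) \<Longrightarrow> dsa q gf W Wt alpha x0 omega' t = dsa q gf W Wt alpha x0 omega t"
  by (induction t) auto

lemma dsa_Suc_components:
  fixes q gf W Wt alpha x0 omega t
  defines "X \<equiv> dsa_x q gf W Wt alpha x0 omega" and "Y \<equiv> dsa_y q gf W Wt alpha x0 omega"
  defines "G \<equiv> \<lambda>t. dsa_grad q gf (X t) (Y t) (omega t)"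
  defines "S \<equiv> dsa q gf W Wt alpha x0 omega"
  shows "fst (S (Suc t)) = X t"
    and "snd (snd (snd (S (Suc t)))) = G t"
    and "Y (Suc t) = (\<lambda>n i. if i = omega t n then X t $ n else Y t n i)"
    and "X (Suc t) = (if t = 0 then Zop W (X t) - alpha *\<^sub>R G t
           else X t + Zop W (X t) - Zop Wt (fst (S t)) - alpha *\<^sub>R (G t - snd (snd (snd (S t)))))"
proof -
  have S_Suc: "S (Suc t) = (X t, (if t = 0 then Zop W (X t) - alpha *\<^sub>R G t
           else X t + Zop W (X t) - Zop Wt (fst (S t)) - alpha *\<^sub>R (G t - snd (snd (snd (S t))))),
      (\<lambda>n i. if i = omega t n then X t $ n else Y t n i), G t)"
  proof -
    obtain xp x y gp where St: "S t = (xp, x, y, gp)" by (cases "S t") auto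
    have "X t = x" "Y t = y" by (simp_all add: X_def Y_def dsa_x_def dsa_y_def St[unfolded S_def])
    thus ?thesis unfolding G_def by (simp only: S_def dsa.simps St[unfolded S_def] prod.case Let_def fst_conv snd_conv)
  qed
  have "X (Suc t) = fst (snd (S (Suc t)))" "Y (Suc t) = fst (snd (snd (S (Suc t))))"
    by (simp_all add: X_def Y_def S_def dsa_x_def dsa_y_def)
  thus "fst (S (Suc t)) = X t" and "snd (snd (snd (S (Suc t)))) = G t"
    and "Y (Suc t) = (\<lambda>n i. if i = omega t n then X t $ n else Y t n i)"
    and "X (Suc t) = (if t = 0 then Zop W (X t) - alpha *\<^sub>R G t
           else X t + Zop W (X t) - Zop Wt (fst (S t)) - alpha *\<^sub>R (G t - snd (snd (snd (S t)))))"
    unfolding S_Suc by simp_all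
qed

lemma dsa_x_Suc:
  fixes q gf W Wt U alpha x0 omega
  assumes U_sq: "U ** U = Wt - W"
  defines "X \<equiv> dsa_x q gf W Wt alpha x0 omega" and "Y \<equiv> dsa_y q gf W Wt alpha x0 omega"
  defines "G \<equiv> \<lambda>t. dsa_grad q gf (X t) (Y t) (omega t)"
  defines "V \<equiv> dsa_v q gf W Wt U alpha x0 omega"
  shows "X (Suc t) = Zop Wt (X t) - alpha *\<^sub>R G t - Zop U (V t)"
proof (induction t)
  case 0
  have "Zop U (V 0) = Zop Wt (X 0) - Zop W (X 0)"
    by (simp add: V_def X_def dsa_v_def Zop_Zop U_sq Zop_mat_diff)
  thus ?case
    using dsa_Suc_components(4)[of q gf W Wt alpha x0 omega 0, folded X_def Y_def]
    by (simp add: G_def)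
next
  case (Suc t)
  note S = dsa_Suc_components[of q gf W Wt alpha x0 omega, folded X_def Y_def G_def]
  have x: "X (Suc (Suc t)) = X (Suc t) + Zop W (X (Suc t)) - Zop Wt (X t) - alpha *\<^sub>R (G (Suc t) - G t)"
    unfolding S(4)[of "Suc t"] S(1,2) by (simp add: G_def)
  have v: "V (Suc t) = V t + Zop U (X (Suc t))"
    by (simp add: V_def X_def dsa_v_def)
  have UU: "Zop U (Zop U (X (Suc t))) = Zop Wt (X (Suc t)) - Zop W (X (Suc t))"
    by (simp add: Zop_Zop U_sq Zop_mat_diff)
  have IH: "Zop Wt (X t) = X (Suc t) + alpha *\<^sub>R G t + Zop U (V t)"
    using Suc.IH by simp
  show ?case unfolding x v Zop_add UU IH by (simp add: algebra_simps)
qed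

lemma dsa_v_Suc:
  "dsa_v q gf W Wt U alpha x0 omega (Suc t)
    = dsa_v q gf W Wt U alpha x0 omega t + Zop U (dsa_x q gf W Wt alpha x0 omega (Suc t))"
  by (simp add: dsa_v_def)

lemma dsa_v_in_range: "dsa_v q gf W Wt U alpha x0 omega t \<in> range (Zop U)"
  by (auto simp: dsa_v_def Zop_sum[symmetric])

lemma range_Zop_diff:
  assumes "x \<in> range (Zop U)" "y \<in> range (Zop U)"
  shows "x - y \<in> range (Zop U)"
proof -
  obtain a b where "x = Zop U a" "y = Zop U b" using assms by blast
  hence "x - y = Zop U (a - b)" by (simp add: Zop_diff)
  thus ?thesis by simp
qed

section \<open>Choice of the contraction factor\<close>

lemma contraction_from_energy_bound:
  fixes Lnext L R B Wn :: real
  assumes step: "Lnext - L \<le> R - g * Wn" and bound: "L \<le> B + K * Wn"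
    and dl: "0 \<le> dl" "dl * K \<le> g" and Wn: "0 \<le> Wn"
  shows "Lnext \<le> (1 - dl) * L + (R + dl * B)"
proof -
  have "dl * L \<le> dl * B + (dl * K) * Wn"
    using mult_left_mono[OF bound dl(1)] by (simp add: algebra_simps)
  moreover have "(dl * K) * Wn \<le> g * Wn" using dl(2) Wn by (rule mult_right_mono)
  ultimately show ?thesis using step by (simp add: algebra_simps)
qed

text \<open>H, DD and PP stand for the expectations of d\<bullet>e, |d|^2 and p^{t+1}, F for the average
  Bregman divergence at x^t, p for p^t and X for |e|^2; kap is the coefficient of E|d|^2 and b its
  value for delta = 0.\<close>
lemma residual_nonpos:
  fixes H DD PP F p X :: real
  assumes H: "F + mu / 2 * X \<le> H" and DD: "DD \<le> 4 * L * F + 4 * L * p - mu\<^sup>2 * X"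
    and PP: "PP - p \<le> F / qmin - p / qmax"
    and F: "0 \<le> F" "F \<le> L / 2 * X" and p: "0 \<le> p" and X: "0 \<le> X"
    and alpha: "0 < alpha" and c: "0 \<le> c" and L: "0 < L" and kap: "b \<le> kap" "0 \<le> b"
    and p_coeff: "4 * L * kap + dl * c \<le> c / qmax"
    and X_coeff: "max (c / qmin + 4 * L * b - 2 * alpha) 0 * L / 2 + 2 * L\<^sup>2 * (kap - b) + dl * K
                    \<le> alpha * mu + b * mu\<^sup>2"
  shows "- 2 * alpha * H + kap * DD + c * PP - c * p + dl * K * X + dl * c * p \<le> 0"
proof -
  define A where "A = c / qmin + 4 * L * b - 2 * alpha"
  have "2 * alpha * (F + mu / 2 * X) \<le> 2 * alpha * H" using H alpha by simp
  moreover have "kap * DD \<le> kap * (4 * L * F + 4 * L * p - mu\<^sup>2 * X)"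
    using DD kap by (intro mult_left_mono) auto
  moreover have "c * (PP - p) \<le> c * (F / qmin - p / qmax)" using PP c by (rule mult_left_mono)
  ultimately have "- 2 * alpha * H + kap * DD + c * PP - c * p + dl * K * X + dl * c * p
      \<le> (A + 4 * L * (kap - b)) * F + (4 * L * kap + dl * c - c / qmax) * p
        + (dl * K - alpha * mu - kap * mu\<^sup>2) * X"
    unfolding A_def by (simp add: algebra_simps)
  also have "(A + 4 * L * (kap - b)) * F \<le> (max A 0 + 4 * L * (kap - b)) * (L / 2 * X)"
    using F kap L by (intro mult_mono) auto
  also have "(4 * L * kap + dl * c - c / qmax) * p \<le> 0"
    using p_coeff p by (intro mult_nonpos_nonneg) auto
  also have "(max A 0 + 4 * L * (kap - b)) * (L / 2 * X) + 0 + (dl * K - alpha * mu - kap * mu\<^sup>2) * X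
      = (max A 0 * L / 2 + 2 * L\<^sup>2 * (kap - b) + dl * K - alpha * mu - kap * mu\<^sup>2) * X"
    by (simp add: power2_eq_square algebra_simps)
  also have "\<dots> \<le> 0"
  proof (rule mult_nonpos_nonneg[OF _ X])
    have "b * mu\<^sup>2 \<le> kap * mu\<^sup>2" using kap by (intro mult_right_mono) auto
    thus "max A 0 * L / 2 + 2 * L\<^sup>2 * (kap - b) + dl * K - alpha * mu - kap * mu\<^sup>2 \<le> 0"
      using X_coeff unfolding A_def by linarith
  qed
  finally show ?thesis by simp
qed

lemma eta_bound_imp_L_less:
  fixes mu L qmin qmax eta :: real
  assumes mu: "0 < mu" "mu \<le> L" and q: "0 < qmin" "qmin \<le> qmax"
    and eta: "L\<^sup>2 * qmax / (mu * qmin) + L\<^sup>2 / mu - L < eta"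
  shows "L < eta"
proof -
  have "L\<^sup>2 / mu * 1 \<le> L\<^sup>2 / mu * (qmax / qmin)"
    using q mu by (intro mult_left_mono) auto
  moreover have "L * mu \<le> L * L" using mu by (intro mult_left_mono) auto
  hence "L \<le> L\<^sup>2 / mu" using mu by (simp add: field_simps power2_eq_square)
  ultimately show ?thesis using eta by (simp add: field_simps)
qed

lemma stepsize_bounds:
  fixes mu L qmin qmax eta alpha c :: real
  assumes mu: "0 < mu" "mu \<le> L" and q: "0 < qmin" "qmin \<le> qmax"
    and eta: "L < eta" and alpha: "0 < alpha"
    and c_lb: "4 * alpha * L * qmax / eta < c"
    and c_ub: "c < 4 * alpha * mu * qmin / L - 2 * alpha * qmin * (2 * L - mu) / eta"
  shows "4 * L * (alpha / eta) < c / qmax"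
    and "max (c / qmin + 4 * L * (alpha / eta) - 2 * alpha) 0 * L / 2 < alpha * mu + alpha / eta * mu\<^sup>2"
proof -
  have L: "0 < L" "0 < eta" using mu eta by linarith+
  show "4 * L * (alpha / eta) < c / qmax"
    using c_lb q by (simp add: field_simps)
  define R where "R = 4 * alpha * mu / L - 2 * alpha * (2 * L - mu) / eta"
  have "c / qmin < R"
    using c_ub q by (simp add: R_def field_simps)
  hence "(c / qmin + 4 * L * (alpha / eta) - 2 * alpha) * L / 2
      < (R + 4 * L * (alpha / eta) - 2 * alpha) * L / 2"
    using L by (intro divide_strict_right_mono mult_strict_right_mono) auto
  also have "\<dots> = 2 * alpha * mu + alpha * L * mu / eta - alpha * L"
    using L by (simp add: R_def field_simps)
  also have "\<dots> \<le> alpha * mu + alpha / eta * mu\<^sup>2"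
  proof -
    have "0 \<le> alpha * (L - mu) * (1 - mu / eta)"
      using alpha mu eta L by (intro mult_nonneg_nonneg) auto
    moreover have "alpha * (L - mu) * (1 - mu / eta)
        = alpha * L - alpha * L * mu / eta + alpha / eta * mu\<^sup>2 - alpha * mu"
      using L by (simp add: field_simps power2_eq_square)
    ultimately show ?thesis by linarith
  qed
  finally have "(c / qmin + 4 * L * (alpha / eta) - 2 * alpha) * L / 2 < alpha * mu + alpha / eta * mu\<^sup>2" .
  moreover have "0 < alpha * mu + alpha / eta * mu\<^sup>2"
    using alpha mu L by (intro add_pos_nonneg) auto
  ultimately show "max (c / qmin + 4 * L * (alpha / eta) - 2 * alpha) 0 * L / 2 < alpha * mu + alpha / eta * mu\<^sup>2"
    by (metis max_def mult_zero_left div_0)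
qed

section \<open>Expected decrease of the Lyapunov function\<close>

locale dsa_setting =
  fixes q :: "'n::finite \<Rightarrow> nat"
    and f :: "'n \<Rightarrow> nat \<Rightarrow> real^'p::finite \<Rightarrow> real"
    and gf :: "'n \<Rightarrow> nat \<Rightarrow> real^'p \<Rightarrow> real^'p"
    and mu L :: real
    and W Wt U :: "real^'n^'n"
    and xs :: "real^'p" and vs :: "real^'p^'n"
    and alpha eta c :: real
  assumes q_pos: "\<And>n. 1 \<le> q n"
    and smooth: "\<And>n i. i \<in> {1..q n} \<Longrightarrow> smooth_strongly_convex mu L (f n i) (gf n i)"
    and mu_pos: "0 < mu"
    and Wt_sym: "transpose Wt = Wt" and U_sym: "transpose U = U" and U_sq: "U ** U = Wt - W"
    and Wt_one: "Wt *v vec 1 = vec 1" and W_one: "W *v vec 1 = vec 1"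
    and W_le_Wt: "\<And>z. z \<bullet> (W *v z) \<le> z \<bullet> (Wt *v z)"
    and Wt_le: "\<And>z. z \<bullet> (Wt *v z) \<le> z \<bullet> (((1/2) *\<^sub>R (mat 1 + W)) *v z)"
    and vs_opt: "alpha *\<^sub>R (\<chi> n. (1 / real (q n)) *\<^sub>R (\<Sum>i\<in>{1..q n}. gf n i xs)) + Zop U vs = 0"
    and eta: "L\<^sup>2 * real (Max (range q)) / (mu * real (Min (range q))) + L\<^sup>2 / mu - L < eta"
    and alpha_pos: "0 < alpha"
    and alpha_ub: "alpha < min_eig_kron Wt TYPE('p) / (2 * eta)"
    and c_lb: "4 * alpha * L * real (Max (range q)) / eta < c"
    and c_ub: "c < 4 * alpha * mu * real (Min (range q)) / L
                   - 2 * alpha * real (Min (range q)) * (2 * L - mu) / eta"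
begin

definition qmin :: real where "qmin = real (Min (range q))"
definition qmax :: real where "qmax = real (Max (range q))"
definition gamma :: real where "gamma = min_eig_kron Wt TYPE('p)"

lemma q_bounds: "1 \<le> qmin" "qmin \<le> real (q n)" "real (q n) \<le> qmax"
proof -
  have "Min (range q) \<in> range q" by (intro Min_in) auto
  thus "1 \<le> qmin" using q_pos unfolding qmin_def by (metis One_nat_def of_nat_1 of_nat_le_iff rangeE)
qed (simp_all add: qmin_def qmax_def)

lemma mu_le_L: "mu \<le> L"
proof -
  have "1 \<in> {1..q undefined}" using q_pos by simp
  moreover have "vec 1 \<noteq> (0 :: real^'p)" by (simp add: vec_eq_iff)
  ultimately show ?thesis by (rule strong_convexity_le_lipschitz[OF smooth])
qed

lemma L_pos: "0 < L"
  using mu_pos mu_le_L by linarith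

lemma qmin_le_qmax: "qmin \<le> qmax"
  using q_bounds(2,3)[of undefined] by linarith

lemma L_less_eta: "L < eta"
  using eta_bound_imp_L_less[OF mu_pos mu_le_L _ qmin_le_qmax eta[folded qmin_def qmax_def]] q_bounds(1) by simp

lemma eta_pos: "0 < eta"
  using L_pos L_less_eta by linarith

lemma gamma_gap_pos: "0 < gamma - alpha * eta"
proof -
  have "alpha * (2 * eta) < gamma"
    using alpha_ub eta_pos unfolding gamma_def by (simp add: pos_less_divide_eq)
  moreover have "0 < alpha * eta" using alpha_pos eta_pos by simp
  ultimately show ?thesis by simp
qed

lemma c_pos: "0 < c"
proof -
  have "0 \<le> 4 * alpha * L * qmax / eta"
    using alpha_pos L_pos eta_pos q_bounds(1) qmin_le_qmax by simp
  thus ?thesis using c_lb unfolding qmax_def by linarith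
qed

definition xstar :: "real^'p^'n" where "xstar = (\<chi> n. xs)"
definition gstar :: "real^'p^'n" where "gstar = (\<chi> n. mean {1..q n} (\<lambda>i. gf n i xs))"

lemma Zop_Wt_xstar: "Zop Wt xstar = xstar"
  unfolding xstar_def by (rule Zop_const[OF Wt_one])

lemma Zop_U_xstar: "Zop U xstar = 0"
proof -
  have "Zop U xstar \<bullet> Zop U xstar = xstar \<bullet> Zop U (Zop U xstar)" by (rule Zop_symmetric[OF U_sym])
  also have "Zop U (Zop U xstar) = 0"
    using Zop_const[OF W_one, of xs] Zop_const[OF Wt_one, of xs]
    by (simp add: Zop_Zop U_sq Zop_mat_diff xstar_def)
  finally show ?thesis by simp
qed

lemma gstar_opt: "alpha *\<^sub>R gstar + Zop U vs = 0"
  using vs_opt by (simp add: gstar_def mean_def)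

lemma W_le_Wt_Zop: "z \<bullet> Zop W z \<le> z \<bullet> Zop Wt z"
  by (rule Zop_quadratic_form_mono[OF W_le_Wt])

lemma Wt_le_Zop: "2 * (z \<bullet> Zop Wt z) \<le> z \<bullet> z + z \<bullet> Zop W z"
proof -
  have "z \<bullet> Zop Wt z \<le> z \<bullet> Zop ((1/2) *\<^sub>R (mat 1 + W)) z"
    by (rule Zop_quadratic_form_mono[OF Wt_le])
  thus ?thesis by (simp add: Zop_mat_scaleR Zop_mat_add Zop_mat_1 inner_add_right)
qed

lemma gamma_le_Zop: "gamma * (norm z)\<^sup>2 \<le> z \<bullet> Zop Wt (z :: real^'p^'n)"
  unfolding gamma_def by (rule min_eig_kron_le_quadratic_form[OF Wt_sym])

definition Wt_norm :: real where "Wt_norm = onorm (Zop Wt :: real^'p^'n \<Rightarrow> real^'p^'n)"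

text \<open>A positive lower bound for U on its range (any such constant does).\<close>
definition U_gain :: real where
  "U_gain = (SOME e. 0 < e \<and> (\<forall>v \<in> range (Zop U :: real^'p^'n \<Rightarrow> _). e * norm v \<le> norm (Zop U v)))"

lemma U_gain: "0 < U_gain" "v \<in> range (Zop U) \<Longrightarrow> U_gain * norm v \<le> norm (Zop U (v :: real^'p^'n))"
proof -
  have "\<exists>e>0. \<forall>v\<in>range (Zop U :: real^'p^'n \<Rightarrow> _). e * norm v \<le> norm (Zop U v)"
    by (rule Zop_bounded_below_on_range[OF U_sym])
  from someI_ex[OF this[unfolded Bex_def]]
  show "0 < U_gain" "v \<in> range (Zop U) \<Longrightarrow> U_gain * norm v \<le> norm (Zop U (v :: real^'p^'n))"
    unfolding U_gain_def by blast+
qed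

lemma Wt_norm: "0 \<le> Wt_norm" "norm (Zop Wt z) \<le> Wt_norm * norm (z :: real^'p^'n)"
  unfolding Wt_norm_def using onorm_pos_le onorm bounded_linear_Zop by blast+

definition Kw :: real where "Kw = 3 / U_gain\<^sup>2"

lemma Kw_pos: "0 < Kw"
  using U_gain(1) by (simp add: Kw_def)

definition Ke :: real where "Ke = Wt_norm + Kw * (Wt_norm + 1)\<^sup>2"
definition Kd :: real where "Kd = Kw * alpha\<^sup>2"

text \<open>The dual error is recovered from U v because v lies in the range of U.\<close>
lemma energy_le:
  fixes e d v :: "real^'p^'n"
  assumes v: "v \<in> range (Zop U)" and e': "e' = Zop Wt e - alpha *\<^sub>R d - Zop U v"
  shows "e \<bullet> Zop Wt e + (norm v)\<^sup>2 \<le> Ke * (norm e)\<^sup>2 + Kd * (norm d)\<^sup>2 + Kw * (norm (e' - e))\<^sup>2"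
proof -
  have "norm (Zop Wt e - e) \<le> (Wt_norm + 1) * norm e"
    using norm_triangle_ineq4[of "Zop Wt e" e] Wt_norm(2)[of e] by (simp add: distrib_right)
  hence "(norm (Zop Wt e - e))\<^sup>2 \<le> (Wt_norm + 1)\<^sup>2 * (norm e)\<^sup>2"
    by (metis norm_ge_zero power_mono power_mult_distrib)
  hence Wt_e: "Kw * (norm (Zop Wt e - e))\<^sup>2 \<le> Kw * (Wt_norm + 1)\<^sup>2 * (norm e)\<^sup>2"
    using mult_left_mono[of _ _ Kw] Kw_pos by (simp add: mult.assoc)
  have "Zop U v = (Zop Wt e - e) - alpha *\<^sub>R d - (e' - e)" using e' by simp
  hence "(norm (Zop U v))\<^sup>2 \<le> 3 * ((norm (Zop Wt e - e))\<^sup>2 + alpha\<^sup>2 * (norm d)\<^sup>2 + (norm (e' - e))\<^sup>2)"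
    using norm_diff3_sq_le[of "Zop Wt e - e" "alpha *\<^sub>R d" "e' - e"] by (simp add: power_mult_distrib)
  moreover have "U_gain\<^sup>2 * (norm v)\<^sup>2 \<le> (norm (Zop U v))\<^sup>2"
    using U_gain v by (metis mult_nonneg_nonneg norm_ge_zero power_mono power_mult_distrib less_imp_le)
  ultimately have "(norm v)\<^sup>2 \<le> Kw * ((norm (Zop Wt e - e))\<^sup>2 + alpha\<^sup>2 * (norm d)\<^sup>2 + (norm (e' - e))\<^sup>2)"
    using U_gain(1) by (simp add: Kw_def field_simps)
  moreover have "e \<bullet> Zop Wt e \<le> Wt_norm * (norm e)\<^sup>2"
    using norm_cauchy_schwarz[of e "Zop Wt e"] mult_left_mono[OF Wt_norm(2)[of e] norm_ge_zero[of e]]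
    by (simp add: power2_eq_square algebra_simps)
  ultimately show ?thesis
    using Wt_e by (simp add: Ke_def Kd_def algebra_simps)
qed

definition breg :: "'n \<Rightarrow> nat \<Rightarrow> real^'p \<Rightarrow> real" where
  "breg n i = bregman (f n i) (gf n i) xs"

text \<open>For the gradient table Y = y^t this is the paper's p^t.\<close>
definition bregman_table :: "('n \<Rightarrow> nat \<Rightarrow> real^'p) \<Rightarrow> real" where
  "bregman_table Y = (\<Sum>n\<in>UNIV. mean {1..q n} (\<lambda>i. breg n i (Y n i)))"

definition lyap :: "real^'p^'n \<Rightarrow> ('n \<Rightarrow> nat \<Rightarrow> real^'p) \<Rightarrow> real^'p^'n \<Rightarrow> real" where
  "lyap X Y V = (X - xstar) \<bullet> Zop Wt (X - xstar) + (norm (V - vs))\<^sup>2 + c * bregman_table Y"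

definition next_x :: "real^'p^'n \<Rightarrow> ('n \<Rightarrow> nat \<Rightarrow> real^'p) \<Rightarrow> real^'p^'n \<Rightarrow> ('n \<Rightarrow> nat) \<Rightarrow> real^'p^'n" where
  "next_x X Y V j = Zop Wt X - alpha *\<^sub>R dsa_grad q gf X Y j - Zop U V"

definition refresh :: "real^'p^'n \<Rightarrow> ('n \<Rightarrow> nat \<Rightarrow> real^'p) \<Rightarrow> ('n \<Rightarrow> nat) \<Rightarrow> 'n \<Rightarrow> nat \<Rightarrow> real^'p" where
  "refresh X Y j = (\<lambda>n i. if i = j n then X $ n else Y n i)"

text \<open>Each ratio secures one of the coefficient conditions of residual_nonpos and
  contraction_from_energy_bound.\<close>
definition delta :: real where
  "delta = min (1/2) (min ((c / qmax - 4 * L * (alpha / eta)) / (4 * L * Kd + c))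
      (min ((alpha * mu + alpha / eta * mu\<^sup>2 - max (c / qmin + 4 * L * (alpha / eta) - 2 * alpha) 0 * L / 2)
             / (Ke + 2 * L\<^sup>2 * Kd))
           ((gamma - alpha * eta) / Kw)))"

lemma delta:
  shows "0 < delta" and "delta < 1"
    and "4 * L * (alpha / eta + delta * Kd) + delta * c \<le> c / qmax"
    and "max (c / qmin + 4 * L * (alpha / eta) - 2 * alpha) 0 * L / 2 + 2 * L\<^sup>2 * (delta * Kd)
          + delta * Ke \<le> alpha * mu + alpha / eta * mu\<^sup>2"
    and "delta * Kw \<le> gamma - alpha * eta"
proof -
  note bounds = stepsize_bounds[OF mu_pos mu_le_L _ qmin_le_qmax L_less_eta alpha_pos
      c_lb[folded qmax_def] c_ub[folded qmin_def]]
  have q0: "0 < qmin" using q_bounds(1) by simp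
  have Kd: "0 \<le> Kd" and Ke: "0 < Ke"
    using Kw_pos Wt_norm(1) by (simp_all add: Kd_def Ke_def add_nonneg_pos)
  have den: "0 < 4 * L * Kd + c" "0 < Ke + 2 * L\<^sup>2 * Kd"
    using Kd Ke L_pos c_pos by (simp_all add: add_nonneg_pos add_pos_nonneg)
  show "0 < delta" and "delta < 1"
    using bounds[OF q0] den gamma_gap_pos Kw_pos by (simp_all add: delta_def)
  have "delta \<le> (c / qmax - 4 * L * (alpha / eta)) / (4 * L * Kd + c)"
    unfolding delta_def by linarith
  thus "4 * L * (alpha / eta + delta * Kd) + delta * c \<le> c / qmax"
    using den by (simp add: pos_le_divide_eq algebra_simps)
  have "delta \<le> (alpha * mu + alpha / eta * mu\<^sup>2 - max (c / qmin + 4 * L * (alpha / eta) - 2 * alpha) 0 * L / 2)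
             / (Ke + 2 * L\<^sup>2 * Kd)"
    unfolding delta_def by linarith
  thus "max (c / qmin + 4 * L * (alpha / eta) - 2 * alpha) 0 * L / 2 + 2 * L\<^sup>2 * (delta * Kd)
          + delta * Ke \<le> alpha * mu + alpha / eta * mu\<^sup>2"
    using den by (simp add: pos_le_divide_eq algebra_simps)
  have "delta \<le> (gamma - alpha * eta) / Kw" unfolding delta_def by linarith
  thus "delta * Kw \<le> gamma - alpha * eta" using Kw_pos by (simp add: pos_le_divide_eq)
qed

lemma lyap_step:
  fixes X V :: "real^'p^'n" and Y j
  assumes v: "V - vs \<in> range (Zop U)"
  defines "e \<equiv> X - xstar" and "d \<equiv> dsa_grad q gf X Y j - gstar"
  defines "X' \<equiv> next_x X Y V j"
  shows "lyap X' (refresh X Y j) (V + Zop U X')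
    \<le> (1 - delta) * lyap X Y V
      + (- 2 * alpha * (d \<bullet> e) + alpha / eta * (norm d)\<^sup>2
         + c * (bregman_table (refresh X Y j) - bregman_table Y)
         + delta * (Ke * (norm e)\<^sup>2 + Kd * (norm d)\<^sup>2 + c * bregman_table Y))"
proof -
  define e' where "e' = X' - xstar"
  have e': "e' = Zop Wt e - alpha *\<^sub>R d - Zop U (V - vs)"
    using gstar_opt Zop_Wt_xstar
    by (simp add: e'_def X'_def next_x_def e_def d_def Zop_diff algebra_simps eq_neg_iff_add_eq_0)
  have v': "V + Zop U X' - vs = (V - vs) + Zop U e'"
    by (simp add: e'_def Zop_diff Zop_U_xstar)
  have "e' \<bullet> Zop Wt e' + (norm (V - vs + Zop U e'))\<^sup>2 - (e \<bullet> Zop Wt e + (norm (V - vs))\<^sup>2)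
      \<le> - (gamma - alpha * eta) * (norm (e' - e))\<^sup>2 - 2 * alpha * (d \<bullet> e) + alpha / eta * (norm d)\<^sup>2"
    by (rule primal_dual_energy_step[OF Wt_sym U_sym U_sq W_le_Wt_Zop Wt_le_Zop gamma_le_Zop
          alpha_pos eta_pos e'])
  moreover have "e \<bullet> Zop Wt e + (norm (V - vs))\<^sup>2 \<le> Ke * (norm e)\<^sup>2 + Kd * (norm d)\<^sup>2 + Kw * (norm (e' - e))\<^sup>2"
    by (rule energy_le[OF v e'])
  ultimately show ?thesis
    unfolding lyap_def e'_def[symmetric] e_def[symmetric] v'
    by (intro contraction_from_energy_bound[where K = Kw and g = "gamma - alpha * eta"
          and Wn = "(norm (e' - e))\<^sup>2"]
        less_imp_le[OF delta(1)] delta(5)) (simp_all add: algebra_simps)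
qed

definition draws :: "('n \<Rightarrow> nat) set" where "draws = PiE UNIV (\<lambda>n. {1..q n})"

lemma draws: "finite draws" "draws \<noteq> {}"
  using q_pos by (auto simp: draws_def finite_PiE PiE_eq_empty_iff)

lemma mean_draws_sum:
  "mean draws (\<lambda>j. \<Sum>n\<in>UNIV. psi n (j n)) = (\<Sum>n\<in>UNIV. mean {1..q n} (psi n :: nat \<Rightarrow> real))"
  unfolding draws_def using q_pos by (intro mean_PiE_sum) (auto simp: Suc_le_eq)

lemma grad_error_nth:
  "(dsa_grad q gf X Y j - gstar) $ n = gf n (j n) (X $ n) - gf n (j n) xs
     - (gf n (j n) (Y n (j n)) - gf n (j n) xs) + mean {1..q n} (\<lambda>i. gf n i (Y n i) - gf n i xs)"
  by (simp add: dsa_grad_def gstar_def mean_diff) (simp add: mean_def)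

lemma norm_vec_sq: "(norm (x :: real^'p^'n))\<^sup>2 = (\<Sum>n\<in>UNIV. (norm (x $ n))\<^sup>2)"
  unfolding power2_norm_eq_inner inner_vec_def ..

lemma mean_draws_inner_grad_error:
  "bregman_table (\<lambda>n i. X $ n) + mu / 2 * (norm (X - xstar))\<^sup>2
    \<le> mean draws (\<lambda>j. (dsa_grad q gf X Y j - gstar) \<bullet> (X - xstar))"
proof -
  define b where "b = (\<lambda>n i. gf n i (Y n i) - gf n i xs)"
  define phi where "phi n i = (gf n i (X $ n) - gf n i xs - b n i + mean {1..q n} (b n)) \<bullet> (X $ n - xs)"
    for n i
  have "mean draws (\<lambda>j. (dsa_grad q gf X Y j - gstar) \<bullet> (X - xstar))
      = mean draws (\<lambda>j. \<Sum>n\<in>UNIV. phi n (j n))"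
    unfolding inner_vec_def[of "dsa_grad q gf X Y _ - gstar"] grad_error_nth
    by (simp add: phi_def b_def xstar_def)
  also have "\<dots> = (\<Sum>n\<in>UNIV. mean {1..q n} (phi n))" by (rule mean_draws_sum)
  also have "\<dots> \<ge> (\<Sum>n\<in>UNIV. mean {1..q n} (\<lambda>i. breg n i (X $ n)) + mu / 2 * (norm (X $ n - xs))\<^sup>2)"
    unfolding breg_def phi_def b_def using q_pos
    by (intro sum_mono saga_inner_bound[where L = L] smooth) (auto simp: Suc_le_eq)
  finally show ?thesis
    by (simp add: bregman_table_def norm_vec_sq xstar_def sum.distrib sum_distrib_left sum_divide_distrib)
qed

lemma mean_draws_sq_grad_error:
  "mean draws (\<lambda>j. (norm (dsa_grad q gf X Y j - gstar))\<^sup>2)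
    \<le> 4 * L * bregman_table (\<lambda>n i. X $ n) + 4 * L * bregman_table Y - mu\<^sup>2 * (norm (X - xstar))\<^sup>2"
proof -
  define b where "b = (\<lambda>n i. gf n i (Y n i) - gf n i xs)"
  define phi where "phi n i = (norm (gf n i (X $ n) - gf n i xs - b n i + mean {1..q n} (b n)))\<^sup>2"
    for n i
  have "mean draws (\<lambda>j. (norm (dsa_grad q gf X Y j - gstar))\<^sup>2) = mean draws (\<lambda>j. \<Sum>n\<in>UNIV. phi n (j n))"
    unfolding norm_vec_sq[of "dsa_grad q gf X Y _ - gstar"] grad_error_nth by (simp add: phi_def b_def)
  also have "\<dots> = (\<Sum>n\<in>UNIV. mean {1..q n} (phi n))" by (rule mean_draws_sum)
  also have "\<dots> \<le> (\<Sum>n\<in>UNIV. 4 * L * mean {1..q n} (\<lambda>i. breg n i (X $ n))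
      + 4 * L * mean {1..q n} (\<lambda>i. breg n i (Y n i)) - mu\<^sup>2 * (norm (X $ n - xs))\<^sup>2)"
    unfolding breg_def phi_def b_def using q_pos mu_pos L_pos
    by (intro sum_mono saga_second_moment_bound smooth) (auto simp: Suc_le_eq)
  finally show ?thesis
    by (simp add: bregman_table_def norm_vec_sq xstar_def sum.distrib sum_subtractf sum_distrib_left)
qed

lemma bregman_table_nonneg: "0 \<le> bregman_table Y"
  unfolding bregman_table_def breg_def
  using bregman_nonneg[OF smooth less_imp_le[OF mu_pos]] by (intro sum_nonneg mean_nonneg) auto

lemma bregman_table_current_le: "bregman_table (\<lambda>n i. X $ n) \<le> L / 2 * (norm (X - xstar))\<^sup>2"
proof -
  have "mean {1..q n} (\<lambda>i. breg n i (X $ n)) \<le> mean {1..q n} (\<lambda>i. L / 2 * (norm (X $ n - xs))\<^sup>2)" for n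
    unfolding breg_def using bregman_le_lipschitz_gradient smooth_strongly_convexD(1,2)[OF smooth]
    by (intro mean_mono) blast
  hence "bregman_table (\<lambda>n i. X $ n) \<le> (\<Sum>n\<in>UNIV. L / 2 * (norm (X $ n - xs))\<^sup>2)"
    unfolding bregman_table_def using q_pos by (intro sum_mono) (simp add: mean_const Suc_le_eq)
  thus ?thesis by (simp add: norm_vec_sq xstar_def sum_distrib_left)
qed

lemma mean_draws_refresh:
  "mean draws (\<lambda>j. bregman_table (refresh X Y j)) - bregman_table Y
    \<le> bregman_table (\<lambda>n i. X $ n) / qmin - bregman_table Y / qmax"
proof -
  define psi where
    "psi = (\<lambda>n l. mean {1..q n} (\<lambda>i. if i = l then breg n i (X $ n) else breg n i (Y n i)))"
  have "mean draws (\<lambda>j. bregman_table (refresh X Y j)) = mean draws (\<lambda>j. \<Sum>n\<in>UNIV. psi n (j n))"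
    unfolding bregman_table_def refresh_def psi_def by (simp add: if_distrib)
  also have "\<dots> = (\<Sum>n\<in>UNIV. mean {1..q n} (psi n))" by (rule mean_draws_sum)
  also have "\<dots> = (\<Sum>n\<in>UNIV. mean {1..q n} (\<lambda>i. breg n i (X $ n)) / real (q n)
      + (1 - 1 / real (q n)) * mean {1..q n} (\<lambda>i. breg n i (Y n i)))"
    by (simp add: psi_def mean_after_uniform_refresh)
  finally have "mean draws (\<lambda>j. bregman_table (refresh X Y j)) - bregman_table Y
      = (\<Sum>n\<in>UNIV. mean {1..q n} (\<lambda>i. breg n i (X $ n)) / real (q n)
          - mean {1..q n} (\<lambda>i. breg n i (Y n i)) / real (q n))"
    by (simp add: bregman_table_def sum_subtractf[symmetric] algebra_simps)
  also have "\<dots> \<le> (\<Sum>n\<in>UNIV. mean {1..q n} (\<lambda>i. breg n i (X $ n)) / qmin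
      - mean {1..q n} (\<lambda>i. breg n i (Y n i)) / qmax)"
  proof (rule sum_mono)
    fix n
    have "0 \<le> mean {1..q n} (\<lambda>i. breg n i (X $ n))" "0 \<le> mean {1..q n} (\<lambda>i. breg n i (Y n i))"
      unfolding breg_def using bregman_nonneg[OF smooth less_imp_le[OF mu_pos]]
      by (auto intro: mean_nonneg)
    thus "mean {1..q n} (\<lambda>i. breg n i (X $ n)) / real (q n) - mean {1..q n} (\<lambda>i. breg n i (Y n i)) / real (q n)
        \<le> mean {1..q n} (\<lambda>i. breg n i (X $ n)) / qmin - mean {1..q n} (\<lambda>i. breg n i (Y n i)) / qmax"
      using q_bounds(1) q_bounds(2,3)[of n] by (intro diff_mono divide_left_mono) auto
  qed
  finally show ?thesis by (simp add: bregman_table_def sum_subtractf sum_divide_distrib)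
qed

lemma expected_lyap_contraction:
  assumes v: "V - vs \<in> range (Zop U)"
  shows "measure_pmf.expectation (pmf_of_set draws)
      (\<lambda>j. lyap (next_x X Y V j) (refresh X Y j) (V + Zop U (next_x X Y V j)))
    \<le> (1 - delta) * lyap X Y V"
proof -
  define e where "e = X - xstar"
  define d where "d = (\<lambda>j. dsa_grad q gf X Y j - gstar)"
  define T where "T = (\<lambda>j. - 2 * alpha * (d j \<bullet> e) + alpha / eta * (norm (d j))\<^sup>2
      + c * (bregman_table (refresh X Y j) - bregman_table Y)
      + delta * (Ke * (norm e)\<^sup>2 + Kd * (norm (d j))\<^sup>2 + c * bregman_table Y))"
  have "mean draws T = - 2 * alpha * mean draws (\<lambda>j. d j \<bullet> e)
      + (alpha / eta + delta * Kd) * mean draws (\<lambda>j. (norm (d j))\<^sup>2)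
      + c * mean draws (\<lambda>j. bregman_table (refresh X Y j)) - c * bregman_table Y
      + delta * Ke * (norm e)\<^sup>2 + delta * c * bregman_table Y"
    using draws
    by (simp add: T_def mean_add mean_diff mean_scale mean_scale_right mean_divide mean_const algebra_simps)
  also have "\<dots> \<le> 0"
  proof (rule residual_nonpos[where F = "bregman_table (\<lambda>n i. X $ n)" and b = "alpha / eta"
        and mu = mu and L = L and qmin = qmin and qmax = qmax])
    show "alpha / eta \<le> alpha / eta + delta * Kd" "0 \<le> alpha / eta"
      using delta(1) Kw_pos alpha_pos eta_pos by (simp_all add: Kd_def)
    show "max (c / qmin + 4 * L * (alpha / eta) - 2 * alpha) 0 * L / 2
        + 2 * L\<^sup>2 * (alpha / eta + delta * Kd - alpha / eta) + delta * Ke \<le> alpha * mu + alpha / eta * mu\<^sup>2"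
      using delta(4) by simp
  qed (use mean_draws_inner_grad_error mean_draws_sq_grad_error mean_draws_refresh
      bregman_table_nonneg bregman_table_current_le delta(3) alpha_pos c_pos L_pos
      in \<open>simp_all add: d_def e_def\<close>)
  finally have "mean draws T \<le> 0" .
  have "measure_pmf.expectation (pmf_of_set draws)
      (\<lambda>j. lyap (next_x X Y V j) (refresh X Y j) (V + Zop U (next_x X Y V j)))
    \<le> mean draws (\<lambda>j. (1 - delta) * lyap X Y V + T j)"
    unfolding expectation_pmf_of_set_eq_mean[OF draws] T_def d_def e_def
    by (intro mean_mono lyap_step[OF v])
  also have "\<dots> = (1 - delta) * lyap X Y V + mean draws T"
    using draws by (simp add: mean_add mean_const)
  finally show ?thesis using \<open>mean draws T \<le> 0\<close> by linarith
qed

lemma dsa_lyap_eq_lyap: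
  "dsa_lyap q f gf W Wt U alpha c x0 xs vs omega t
    = lyap (dsa_x q gf W Wt alpha x0 omega t) (dsa_y q gf W Wt alpha x0 omega t)
        (dsa_v q gf W Wt U alpha x0 omega t)"
  by (simp add: dsa_lyap_def lyap_def dsa_p_def bregman_table_def breg_def bregman_def mean_def
      xstar_def Let_def)

lemma dsa_lyap_Suc_fun_upd:
  fixes x0 omega t
  defines "X \<equiv> dsa_x q gf W Wt alpha x0 omega t" and "Y \<equiv> dsa_y q gf W Wt alpha x0 omega t"
    and "V \<equiv> dsa_v q gf W Wt U alpha x0 omega t"
  shows "dsa_lyap q f gf W Wt U alpha c x0 xs vs (omega(t := j)) (Suc t)
    = lyap (next_x X Y V j) (refresh X Y j) (V + Zop U (next_x X Y V j))"
proof -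
  let ?omega = "omega(t := j)"
  have prefix: "dsa q gf W Wt alpha x0 ?omega s = dsa q gf W Wt alpha x0 omega s" if "s \<le> t" for s
    using that by (intro dsa_prefix_cong) auto
  have X: "dsa_x q gf W Wt alpha x0 ?omega t = X" and Y: "dsa_y q gf W Wt alpha x0 ?omega t = Y"
    by (simp_all add: X_def Y_def dsa_x_def dsa_y_def prefix)
  have V: "dsa_v q gf W Wt U alpha x0 ?omega t = V"
    unfolding V_def dsa_v_def dsa_x_def by (intro sum.cong refl) (simp add: prefix)
  have X': "dsa_x q gf W Wt alpha x0 ?omega (Suc t) = next_x X Y V j"
    using dsa_x_Suc[OF U_sq, of q gf alpha x0 ?omega t] by (simp add: X Y V next_x_def)
  show ?thesis
    using dsa_Suc_components(3)[of q gf W Wt alpha x0 ?omega t] unfolding X Y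
    by (simp add: dsa_lyap_eq_lyap dsa_v_Suc X' V refresh_def)
qed

end

theorem theorem6:
  fixes E :: "'n::finite \<Rightarrow> 'n \<Rightarrow> bool"
    and q :: "'n \<Rightarrow> nat"
    and f :: "'n \<Rightarrow> nat \<Rightarrow> real^'p::finite \<Rightarrow> real"
    and gf :: "'n \<Rightarrow> nat \<Rightarrow> real^'p \<Rightarrow> real^'p"
    and mu L :: real
    and W Wt U :: "real^'n^'n"
    and xs :: "real^'p" and vs :: "real^'p^'n"
    and x0 :: "real^'p^'n"
    and alpha eta c :: real
  assumes graph_sym: "\<forall>a b. E a b \<longrightarrow> E b a"
    and graph_irrefl: "\<forall>a. \<not> E a a"
    and graph_conn: "\<forall>a b. E\<^sup>*\<^sup>* a b"
    and q_pos: "\<forall>n. 1 \<le> q n"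
    and grad: "\<forall>n. \<forall>i\<in>{1..q n}. \<forall>x. (f n i has_derivative (\<lambda>h. gf n i x \<bullet> h)) (at x)"
    and mu_pos: "0 < mu"
    and strconv: "\<forall>n. \<forall>i\<in>{1..q n}. strongly_convex_on UNIV mu (f n i)"
    and lipschitz: "\<forall>n. \<forall>i\<in>{1..q n}. L-lipschitz_on UNIV (gf n i)"
    and xs_min: "\<forall>z. (\<Sum>n\<in>UNIV. (1 / real (q n)) * (\<Sum>i\<in>{1..q n}. f n i xs))
                    \<le> (\<Sum>n\<in>UNIV. (1 / real (q n)) * (\<Sum>i\<in>{1..q n}. f n i z))"
    and W_sparse: "\<forall>n m. W$n$m \<noteq> 0 \<longrightarrow> m = n \<or> E n m"
    and Wt_sparse: "\<forall>n m. Wt$n$m \<noteq> 0 \<longrightarrow> m = n \<or> E n m"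
    and W_sym: "transpose W = W"
    and Wt_sym: "transpose Wt = Wt"
    and null_Wt: "span {vec 1} \<subseteq> {z. (mat 1 - Wt) *v z = 0}"
    and null_W: "{z. (mat 1 - W) *v z = 0} = span {vec 1}"
    and null_WtW: "{z. (Wt - W) *v z = 0} = span {vec 1}"
    and loewner1: "\<forall>z. z \<bullet> (W *v z) \<le> z \<bullet> (Wt *v z)"
    and loewner2: "\<forall>z. z \<bullet> (Wt *v z) \<le> z \<bullet> (((1/2) *\<^sub>R (mat 1 + W)) *v z)"
    and Wt_pd: "\<forall>z. z \<noteq> 0 \<longrightarrow> 0 < z \<bullet> (Wt *v z)"
    and U_sym: "transpose U = U"
    and U_psd: "\<forall>z. 0 \<le> z \<bullet> (U *v z)"
    and U_sq: "U ** U = Wt - W"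
    and vs_range: "vs \<in> range (Zop U)"
    and vs_opt: "alpha *\<^sub>R (\<chi> n. (1 / real (q n)) *\<^sub>R (\<Sum>i\<in>{1..q n}. gf n i xs)) + Zop U vs = 0"
    and eta: "L\<^sup>2 * real (Max (range q)) / (mu * real (Min (range q))) + L\<^sup>2 / mu - L < eta"
    and alpha_pos: "0 < alpha"
    and alpha_ub: "alpha < min_eig_kron Wt TYPE('p) / (2 * eta)"
    and c_lb: "4 * alpha * L * real (Max (range q)) / eta < c"
    and c_ub: "c < 4 * alpha * mu * real (Min (range q)) / L
                   - 2 * alpha * real (Min (range q)) * (2 * L - mu) / eta"
  shows "\<exists>delta. 0 < delta \<and> delta < 1 \<and>
    (\<forall>omega. (\<forall>s n. omega s n \<in> {1..q n}) \<longrightarrow>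
      (\<forall>t. measure_pmf.expectation (pmf_of_set (PiE UNIV (\<lambda>n. {1..q n})))
              (\<lambda>j. dsa_lyap q f gf W Wt U alpha c x0 xs vs (omega(t := j)) (Suc t))
           \<le> (1 - delta) * dsa_lyap q f gf W Wt U alpha c x0 xs vs omega t))"
proof -
  interpret dsa_setting q f gf mu L W Wt U xs vs alpha eta c
  proof
    show "smooth_strongly_convex mu L (f n i) (gf n i)" if "i \<in> {1..q n}" for n i
      using grad strconv lipschitz that by (simp add: smooth_strongly_convex_def)
    show "Wt *v vec 1 = vec 1" by (rule fixes_vec_one_of_null[OF null_Wt])
    show "W *v vec 1 = vec 1" by (rule fixes_vec_one_of_null) (simp add: null_W)
  qed (use assms in auto)
  show ?thesis
  proof (intro exI[of _ delta] conjI delta(1,2) allI impI)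
    fix omega :: "nat \<Rightarrow> 'n \<Rightarrow> nat" and t
    have "dsa_v q gf W Wt U alpha x0 omega t - vs \<in> range (Zop U)"
      using dsa_v_in_range vs_range by (rule range_Zop_diff)
    thus "measure_pmf.expectation (pmf_of_set (PiE UNIV (\<lambda>n. {1..q n})))
        (\<lambda>j. dsa_lyap q f gf W Wt U alpha c x0 xs vs (omega(t := j)) (Suc t))
      \<le> (1 - delta) * dsa_lyap q f gf W Wt U alpha c x0 xs vs omega t"
      unfolding dsa_lyap_Suc_fun_upd unfolding dsa_lyap_eq_lyap draws_def[symmetric]
      by (rule expected_lyap_contraction)
  qed
qed

end
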